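(* Let $p$ be a prime and $V$ an abelian group. The following are equivalent: (1) the $p$-primary torsion subgroup of $V$ is bounded (annihilated by some power of $p$); (2) the canonical map $\operatorname*{colim}_{n\in\mathbb{N}}\mathrm{Ext}^1_{\mathbb{Z}}(V/p^n,\mathbb{Z}/p)\to\mathrm{Ext}^1_{\mathbb{Z}}(V,\mathbb{Z}/p)$, induced by the projections $V\to V/p^n$, is an isomorphism.
   Context: $V/p^n$ denotes $V/p^nV$. *)

theory Defs
  imports "HOL-Algebra.Algebra" "HOL-Number_Theory.Cong"
begin

text \<open>Ext^1_Z(G, Z/p) is modelled by the classical description via factor sets
  (Fuchs, Infinite Abelian Groups): symmetric 2-cocycles G x G -> Z/p modulo
  coboundaries. Values in Z/p are represented by integers, compared modulo p.\<close>

definition ppow_sub :: "('a, 'b) monoid_scheme \<Rightarrow> nat \<Rightarrow> 'a set" where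
  "ppow_sub G m = {x [^]\<^bsub>G\<^esub> m | x. x \<in> carrier G}"

definition quot_pn :: "('a, 'b) monoid_scheme \<Rightarrow> nat \<Rightarrow> nat \<Rightarrow> 'a set monoid" where
  "quot_pn G p n = G Mod (ppow_sub G (p ^ n))"

definition proj_pn :: "('a, 'b) monoid_scheme \<Rightarrow> nat \<Rightarrow> nat \<Rightarrow> 'a \<Rightarrow> 'a set" where
  "proj_pn G p n = (\<lambda>x. ppow_sub G (p ^ n) #>\<^bsub>G\<^esub> x)"

definition trans_pn :: "('a, 'b) monoid_scheme \<Rightarrow> nat \<Rightarrow> nat \<Rightarrow> 'a set \<Rightarrow> 'a set" where
  "trans_pn G p n = (\<lambda>C. ppow_sub G (p ^ n) <#>\<^bsub>G\<^esub> C)"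

definition cocycles :: "('a, 'b) monoid_scheme \<Rightarrow> nat \<Rightarrow> ('a \<Rightarrow> 'a \<Rightarrow> int) set" where
  "cocycles G p = {f.
     (\<forall>a b. a \<notin> carrier G \<or> b \<notin> carrier G \<longrightarrow> f a b = 0) \<and>
     (\<forall>a\<in>carrier G. \<forall>b\<in>carrier G. [f a b = f b a] (mod int p)) \<and>
     (\<forall>a\<in>carrier G. \<forall>b\<in>carrier G. \<forall>c\<in>carrier G.
        [f a b + f (a \<otimes>\<^bsub>G\<^esub> b) c = f b c + f a (b \<otimes>\<^bsub>G\<^esub> c)] (mod int p))}"

definition coboundary :: "('a, 'b) monoid_scheme \<Rightarrow> nat \<Rightarrow> ('a \<Rightarrow> 'a \<Rightarrow> int) \<Rightarrow> bool" where
  "coboundary G p f \<longleftrightarrow> (\<exists>g :: 'a \<Rightarrow> int. \<forall>a\<in>carrier G. \<forall>b\<in>carrier G.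
      [f a b = g a + g b - g (a \<otimes>\<^bsub>G\<^esub> b)] (mod int p))"

definition ext_rel :: "('a, 'b) monoid_scheme \<Rightarrow> nat \<Rightarrow> (('a \<Rightarrow> 'a \<Rightarrow> int) \<times> ('a \<Rightarrow> 'a \<Rightarrow> int)) set" where
  "ext_rel G p = {(f, g). f \<in> cocycles G p \<and> g \<in> cocycles G p \<and>
      coboundary G p (\<lambda>a b. f a b - g a b)}"

text \<open>Ext^1_Z(G, Z/p) as a set of classes (its group structure is not needed:
  a bijective homomorphism is an isomorphism).\<close>
definition Ext1 :: "('a, 'b) monoid_scheme \<Rightarrow> nat \<Rightarrow> ('a \<Rightarrow> 'a \<Rightarrow> int) set set" where
  "Ext1 G p = cocycles G p // ext_rel G p"

definition pullback :: "('a, 'b) monoid_scheme \<Rightarrow> ('a \<Rightarrow> 'c) \<Rightarrow> ('c \<Rightarrow> 'c \<Rightarrow> int) \<Rightarrow> 'a \<Rightarrow> 'a \<Rightarrow> int" where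
  "pullback G \<phi> f = (\<lambda>a b. if a \<in> carrier G \<and> b \<in> carrier G then f (\<phi> a) (\<phi> b) else 0)"

text \<open>The colimit colim_n Ext^1(G/p^n, Z/p) along the maps induced by G/p^k -> G/p^n:
  pairs (n, f) with f a factor set on G/p^n, where (n,f) ~ (m,g) iff their images
  in some Ext^1(G/p^k, Z/p), k >= n, m, coincide.\<close>
definition colim_rel :: "('a, 'b) monoid_scheme \<Rightarrow> nat \<Rightarrow>
    ((nat \<times> ('a set \<Rightarrow> 'a set \<Rightarrow> int)) \<times> (nat \<times> ('a set \<Rightarrow> 'a set \<Rightarrow> int))) set" where
  "colim_rel G p = {((n, f), (m, g)).
      f \<in> cocycles (quot_pn G p n) p \<and> g \<in> cocycles (quot_pn G p m) p \<and>
      (\<exists>k \<ge> max n m.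
         (pullback (quot_pn G p k) (trans_pn G p n) f,
          pullback (quot_pn G p k) (trans_pn G p m) g) \<in> ext_rel (quot_pn G p k) p)}"

definition colim_Ext1 :: "('a, 'b) monoid_scheme \<Rightarrow> nat \<Rightarrow> (nat \<times> ('a set \<Rightarrow> 'a set \<Rightarrow> int)) set set" where
  "colim_Ext1 G p = (SIGMA n:UNIV. cocycles (quot_pn G p n) p) // colim_rel G p"

definition canon_map :: "('a, 'b) monoid_scheme \<Rightarrow> nat \<Rightarrow>
    (nat \<times> ('a set \<Rightarrow> 'a set \<Rightarrow> int)) set \<Rightarrow> ('a \<Rightarrow> 'a \<Rightarrow> int) set" where
  "canon_map G p S = (let y = (SOME y. y \<in> S) in
      Image (ext_rel G p) {pullback G (proj_pn G p (fst y)) (snd y)})"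

definition p_torsion_bounded :: "('a, 'b) monoid_scheme \<Rightarrow> nat \<Rightarrow> bool" where
  "p_torsion_bounded G p \<longleftrightarrow> (\<exists>k::nat. \<forall>x\<in>carrier G.
      (\<exists>m::nat. x [^]\<^bsub>G\<^esub> (p ^ m) = \<one>\<^bsub>G\<^esub>) \<longrightarrow> x [^]\<^bsub>G\<^esub> (p ^ k) = \<one>\<^bsub>G\<^esub>)"

end

theory Submission
  imports Defs
begin

text \<open>
  Injectivity of the canonical map holds for every abelian group: if two inflations become
  cohomologous on \<open>V\<close>, the primitive \<open>g\<close> of their difference is affine modulo \<open>p\<close> along
  \<open>p\<^sup>nV\<close>, hence invariant modulo \<open>p\<close> under \<open>p\<^bsup>n+1\<^esup>V\<close>, so it descends and the two
  classes already agree on \<open>V/p\<^bsup>n+1\<^esup>\<close>.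

  If the \<open>p\<close>-torsion is killed by \<open>p\<^sup>k\<close>, then \<open>x \<mapsto> x\<^sup>m\<close> with \<open>m = p\<^sup>k\<close> is a bijection
  \<open>p\<^sup>kV \<rightarrow> p\<^bsup>2k\<^esup>V\<close>, and the identity \<open>f(a\<^sup>m, b\<^sup>m) = m f(a, b) + (coboundary)\<close> shows
  that every factor set is a coboundary on \<open>p\<^bsup>2k\<^esup>V\<close>.  Adding a coboundary then makes it
  invariant under \<open>p\<^bsup>2k\<^esup>V\<close>, so it is inflated from \<open>V/p\<^bsup>2k\<^esup>\<close>: the map is surjective.

  If the \<open>p\<close>-torsion is unbounded, every \<open>p\<^sup>nV\<close> contains an element of order \<open>p\<close>, and
  divisibility of \<open>\<rat>/\<int>\<close> (via Zorn's lemma) yields a homomorphism \<open>\<Phi> : V \<rightarrow> \<rat>/\<int>\<close> that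
  is nonzero on such an element \<open>x\<^sub>n\<close> for every \<open>n\<close>.  Its integral coboundary \<open>f\<close> is not
  inflated from any \<open>V/p\<^sup>n\<close>: a factor set cohomologous to an inflated one has
  \<open>\<Sum>\<^bsub>i<p\<^esub> f(x, x\<^sup>i) \<equiv> 0 (mod p)\<close> for \<open>x\<close> of order \<open>p\<close> in \<open>p\<^sup>nV\<close>, whereas for \<open>f\<close> this
  sum is \<open>p \<Phi>(x\<^sub>n) \<notin> p\<int>\<close>.
\<close>

section \<open>Factor sets and their cohomology\<close>

locale factor_set = comm_group G for G :: "('a, 'b) monoid_scheme" (structure) +
  fixes p :: nat and f :: "'a \<Rightarrow> 'a \<Rightarrow> int"
  assumes factor_set: "f \<in> cocycles G p"
begin

lemma symmetric: "a \<in> carrier G \<Longrightarrow> b \<in> carrier G \<Longrightarrow> int p dvd f a b - f b a"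
  using factor_set unfolding cocycles_def cong_iff_dvd_diff by auto

lemma cocycle_identity:
  "a \<in> carrier G \<Longrightarrow> b \<in> carrier G \<Longrightarrow> c \<in> carrier G \<Longrightarrow>
    int p dvd f a b + f (a \<otimes> b) c - f b c - f a (b \<otimes> c)"
  using factor_set unfolding cocycles_def cong_iff_dvd_diff by (auto simp: algebra_simps)

lemma cocycle_mult_mult:
  assumes A: "A \<in> carrier G" and a: "a \<in> carrier G" and B: "B \<in> carrier G" and b: "b \<in> carrier G"
  shows "int p dvd f (A \<otimes> a) (B \<otimes> b) - (f A B + f a b + f (A \<otimes> B) (a \<otimes> b) - f A a - f B b)"
proof -
  have "a \<otimes> (B \<otimes> b) = B \<otimes> (a \<otimes> b)" "a \<otimes> B = B \<otimes> a"
    using a B b by (simp_all add: m_lcomm m_comm)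
  then have "f (A \<otimes> a) (B \<otimes> b) - (f A B + f a b + f (A \<otimes> B) (a \<otimes> b) - f A a - f B b)
     = (f A a + f (A \<otimes> a) (B \<otimes> b) - f a (B \<otimes> b) - f A (a \<otimes> (B \<otimes> b)))
     - (f a B + f (a \<otimes> B) b - f B b - f a (B \<otimes> b))
     - (f A B + f (A \<otimes> B) (a \<otimes> b) - f B (a \<otimes> b) - f A (B \<otimes> (a \<otimes> b)))
     + (f B a + f (B \<otimes> a) b - f a b - f B (a \<otimes> b))
     + (f a B - f B a)"
    by simp
  also have "int p dvd \<dots>"
    using cocycle_identity[OF A a m_closed[OF B b]] cocycle_identity[OF a B b]
      cocycle_identity[OF A B m_closed[OF a b]] cocycle_identity[OF B a b] symmetric[OF a B]
    by (rule dvd_add[OF dvd_add[OF dvd_diff[OF dvd_diff]]])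
  finally show ?thesis .
qed

definition pow_defect :: "nat \<Rightarrow> 'a \<Rightarrow> int" where
  "pow_defect m a = (\<Sum>i<m. f (a [^] i) a)"

lemma cocycle_pow_pow:
  assumes a: "a \<in> carrier G" and b: "b \<in> carrier G"
  shows "int p dvd f (a [^] m) (b [^] m)
    - (int m * f a b + pow_defect m (a \<otimes> b) - pow_defect m a - pow_defect m b + f \<one> \<one>)"
proof (induction m)
  case 0
  then show ?case by (simp add: pow_defect_def)
next
  case (Suc m)
  have "a [^] m \<otimes> b [^] m = (a \<otimes> b) [^] m"
    using a b by (simp add: pow_mult_distrib m_comm)
  then have "f (a [^] Suc m) (b [^] Suc m)
      - (int (Suc m) * f a b + pow_defect (Suc m) (a \<otimes> b) - pow_defect (Suc m) a
         - pow_defect (Suc m) b + f \<one> \<one>)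
    = (f (a [^] m \<otimes> a) (b [^] m \<otimes> b) - (f (a [^] m) (b [^] m) + f a b
        + f (a [^] m \<otimes> b [^] m) (a \<otimes> b) - f (a [^] m) a - f (b [^] m) b))
    + (f (a [^] m) (b [^] m)
        - (int m * f a b + pow_defect m (a \<otimes> b) - pow_defect m a - pow_defect m b + f \<one> \<one>))"
    by (simp add: pow_defect_def algebra_simps)
  also have "int p dvd \<dots>"
    using cocycle_mult_mult[OF nat_pow_closed[OF a] a nat_pow_closed[OF b] b] Suc.IH
    by (rule dvd_add)
  finally show ?case .
qed

end

lemma coboundary_add:
  assumes "coboundary G p h1" and "coboundary G p h2"
  shows "coboundary G p (\<lambda>a b. h1 a b + h2 a b)"
proof -
  obtain g1 g2 where
    g1: "\<forall>a\<in>carrier G. \<forall>b\<in>carrier G. [h1 a b = g1 a + g1 b - g1 (a \<otimes>\<^bsub>G\<^esub> b)] (mod int p)" and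
    g2: "\<forall>a\<in>carrier G. \<forall>b\<in>carrier G. [h2 a b = g2 a + g2 b - g2 (a \<otimes>\<^bsub>G\<^esub> b)] (mod int p)"
    using assms unfolding coboundary_def by blast
  have "[h1 a b + h2 a b = (g1 a + g2 a) + (g1 b + g2 b) - (g1 (a \<otimes>\<^bsub>G\<^esub> b) + g2 (a \<otimes>\<^bsub>G\<^esub> b))] (mod int p)"
    if "a \<in> carrier G" "b \<in> carrier G" for a b
    using cong_add[OF g1[rule_format, OF that] g2[rule_format, OF that]]
    by (simp add: algebra_simps)
  then show ?thesis
    unfolding coboundary_def by (intro exI[of _ "\<lambda>x. g1 x + g2 x"]) blast
qed

lemma coboundary_uminus:
  assumes "coboundary G p h"
  shows "coboundary G p (\<lambda>a b. - h a b)"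
proof -
  obtain g where g: "\<forall>a\<in>carrier G. \<forall>b\<in>carrier G. [h a b = g a + g b - g (a \<otimes>\<^bsub>G\<^esub> b)] (mod int p)"
    using assms unfolding coboundary_def by blast
  have "[- h a b = (- g a) + (- g b) - (- g (a \<otimes>\<^bsub>G\<^esub> b))] (mod int p)"
    if "a \<in> carrier G" "b \<in> carrier G" for a b
    using cong_minus_minus_iff[THEN iffD2, OF g[rule_format, OF that]] by (simp add: algebra_simps)
  then show ?thesis
    unfolding coboundary_def by (intro exI[of _ "\<lambda>x. - g x"]) blast
qed

lemma coboundary_of_cong_zero:
  assumes "\<forall>a\<in>carrier G. \<forall>b\<in>carrier G. [h a b = 0] (mod int p)"
  shows "coboundary G p h"
  unfolding coboundary_def using assms by (intro exI[of _ "\<lambda>_. 0"]) simp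

lemma ext_rel_equiv: "equiv (cocycles G p) (ext_rel G p)"
proof (rule equivI)
  show "ext_rel G p \<subseteq> cocycles G p \<times> cocycles G p"
    unfolding ext_rel_def by auto
  show "refl_on (cocycles G p) (ext_rel G p)"
    unfolding refl_on_def ext_rel_def by (auto intro: coboundary_of_cong_zero)
  show "sym (ext_rel G p)"
    using coboundary_uminus unfolding sym_def ext_rel_def by fastforce
  show "trans (ext_rel G p)"
    using coboundary_add unfolding trans_def ext_rel_def by fastforce
qed

lemma ext_rel_refl: "f \<in> cocycles G p \<Longrightarrow> (f, f) \<in> ext_rel G p"
  using ext_rel_equiv unfolding equiv_def refl_on_def by blast

lemma ext_rel_sym: "(f, f') \<in> ext_rel G p \<Longrightarrow> (f', f) \<in> ext_rel G p"
  using ext_rel_equiv unfolding equiv_def by (blast dest: symD)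

lemma ext_rel_trans: "(f, f') \<in> ext_rel G p \<Longrightarrow> (f', f'') \<in> ext_rel G p \<Longrightarrow> (f, f'') \<in> ext_rel G p"
  using ext_rel_equiv unfolding equiv_def by (blast dest: transD)

lemma ext_rel_of_cong:
  assumes "f \<in> cocycles G p" and "f' \<in> cocycles G p"
    and "\<forall>a\<in>carrier G. \<forall>b\<in>carrier G. [f a b = f' a b] (mod int p)"
  shows "(f, f') \<in> ext_rel G p"
  using assms unfolding ext_rel_def
  by (auto intro!: coboundary_of_cong_zero simp: cong_iff_dvd_diff)

lemma pullback_cocycles:
  assumes "f \<in> cocycles H p" and "\<phi> \<in> hom G H" and "monoid G"
  shows "pullback G \<phi> f \<in> cocycles G p"
  using assms unfolding cocycles_def pullback_def
  by (auto simp: hom_mult hom_in_carrier monoid.m_closed)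

lemma pullback_ext_rel:
  assumes "(f1, f2) \<in> ext_rel H p" and \<phi>: "\<phi> \<in> hom G H" and G: "monoid G"
  shows "(pullback G \<phi> f1, pullback G \<phi> f2) \<in> ext_rel G p"
proof -
  obtain g where g: "\<forall>a\<in>carrier H. \<forall>b\<in>carrier H.
      [f1 a b - f2 a b = g a + g b - g (a \<otimes>\<^bsub>H\<^esub> b)] (mod int p)"
    using assms unfolding ext_rel_def coboundary_def by blast
  have "coboundary G p (\<lambda>a b. pullback G \<phi> f1 a b - pullback G \<phi> f2 a b)"
    unfolding coboundary_def pullback_def using \<phi> g
    by (intro exI[of _ "g \<circ> \<phi>"]) (auto simp: hom_def)
  with assms show ?thesis
    unfolding ext_rel_def by (auto intro: pullback_cocycles)
qed

lemma pullback_pullback: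
  assumes "\<And>a. a \<in> carrier G \<Longrightarrow> \<phi> a \<in> carrier H" and "\<And>a. a \<in> carrier G \<Longrightarrow> \<psi> (\<phi> a) = \<chi> a"
  shows "pullback G \<phi> (pullback H \<psi> F) = pullback G \<chi> F"
  using assms unfolding pullback_def by (auto intro!: ext)

definition add_coboundary ::
    "('a, 'b) monoid_scheme \<Rightarrow> ('a \<Rightarrow> 'a \<Rightarrow> int) \<Rightarrow> ('a \<Rightarrow> int) \<Rightarrow> 'a \<Rightarrow> 'a \<Rightarrow> int" where
  "add_coboundary G f h a b =
    (if a \<in> carrier G \<and> b \<in> carrier G then f a b + h a + h b - h (a \<otimes>\<^bsub>G\<^esub> b) else 0)"

context factor_set
begin

lemma add_coboundary_cocycles: "add_coboundary G f h \<in> cocycles G p"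
  unfolding cocycles_def cong_iff_dvd_diff
proof (intro CollectI conjI allI impI ballI)
  fix a b assume "a \<notin> carrier G \<or> b \<notin> carrier G"
  then show "add_coboundary G f h a b = 0"
    by (auto simp: add_coboundary_def)
next
  fix a b assume ab: "a \<in> carrier G" "b \<in> carrier G"
  then have "add_coboundary G f h a b - add_coboundary G f h b a = f a b - f b a"
    by (simp add: add_coboundary_def m_comm)
  with symmetric[OF ab] show "int p dvd add_coboundary G f h a b - add_coboundary G f h b a"
    by simp
next
  fix a b c assume abc: "a \<in> carrier G" "b \<in> carrier G" "c \<in> carrier G"
  then have "add_coboundary G f h a b + add_coboundary G f h (a \<otimes> b) c
      - (add_coboundary G f h b c + add_coboundary G f h a (b \<otimes> c))
    = f a b + f (a \<otimes> b) c - f b c - f a (b \<otimes> c)"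
    by (simp add: add_coboundary_def m_assoc algebra_simps)
  with cocycle_identity[OF abc] show "int p dvd add_coboundary G f h a b
      + add_coboundary G f h (a \<otimes> b) c - (add_coboundary G f h b c + add_coboundary G f h a (b \<otimes> c))"
    by simp
qed

lemma ext_rel_add_coboundary: "(f, add_coboundary G f h) \<in> ext_rel G p"
proof -
  have "f a b - add_coboundary G f h a b = (- h a) + (- h b) - (- h (a \<otimes> b))"
    if "a \<in> carrier G" "b \<in> carrier G" for a b
    using that by (simp add: add_coboundary_def)
  then have "coboundary G p (\<lambda>a b. f a b - add_coboundary G f h a b)"
    unfolding coboundary_def by (intro exI[of _ "\<lambda>a. - h a"]) simp
  with factor_set add_coboundary_cocycles show ?thesis
    unfolding ext_rel_def by blast
qed

end

section \<open>Coboundaries on quotient groups\<close>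

definition coset_rep :: "'a set \<Rightarrow> 'a" where
  "coset_rep S = (SOME x. x \<in> S)"

lemma (in group) coset_rep_r_coset:
  assumes "subgroup H G" and "a \<in> carrier G"
  obtains c where "c \<in> H" and "coset_rep (H #> a) = c \<otimes> a"
proof -
  have "coset_rep (H #> a) \<in> H #> a"
    unfolding coset_rep_def using rcos_self[OF assms(2,1)] by (rule someI)
  then show ?thesis
    using that unfolding r_coset_def by blast
qed

lemma (in group) subgroup_nat_pow_closed: "subgroup H G \<Longrightarrow> h \<in> H \<Longrightarrow> h [^] (n::nat) \<in> H"
  using subgroup_int_pow_closed[of H h "int n"] by (simp add: int_pow_int)

lemma ppow_subI: "x \<in> carrier G \<Longrightarrow> x [^]\<^bsub>G\<^esub> m \<in> ppow_sub G m"
  unfolding ppow_sub_def by auto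

lemma (in comm_group) subgroup_ppow_sub: "subgroup (ppow_sub G m) G"
proof (rule subgroupI)
  show "ppow_sub G m \<subseteq> carrier G" and "ppow_sub G m \<noteq> {}"
    unfolding ppow_sub_def by auto
next
  fix a assume "a \<in> ppow_sub G m"
  then obtain x where "x \<in> carrier G" and "a = x [^] m"
    unfolding ppow_sub_def by auto
  then show "inv a \<in> ppow_sub G m"
    using ppow_subI[of "inv x" G m] by (simp add: nat_pow_inv)
next
  fix a b assume "a \<in> ppow_sub G m" and "b \<in> ppow_sub G m"
  then obtain x y where "x \<in> carrier G" "a = x [^] m" "y \<in> carrier G" "b = y [^] m"
    unfolding ppow_sub_def by auto
  then show "a \<otimes> b \<in> ppow_sub G m"
    using ppow_subI[of "x \<otimes> y" G m] by (simp add: nat_pow_distrib)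
qed

lemma (in group) cong_translation_by_pow:
  assumes H: "subgroup H G"
    and affine: "\<And>c b. c \<in> H \<Longrightarrow> b \<in> carrier G \<Longrightarrow> [g (c \<otimes> b) = g b + g c - g \<one>] (mod int p)"
    and c: "c \<in> H" and b: "b \<in> carrier G"
  shows "[g (c [^] p \<otimes> b) = g b] (mod int p)"
proof -
  have cG: "c \<in> carrier G"
    using H c by (rule subgroup.mem_carrier)
  have "int p dvd g (c [^] j \<otimes> b) - (g b + int j * (g c - g \<one>))" for j :: nat
  proof (induction j)
    case 0
    then show ?case using b by simp
  next
    case (Suc j)
    have "c [^] Suc j \<otimes> b = c \<otimes> (c [^] j \<otimes> b)"
      using cG b by (simp only: nat_pow_Suc2 m_assoc nat_pow_closed)
    then have "g (c [^] Suc j \<otimes> b) - (g b + int (Suc j) * (g c - g \<one>))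
      = (g (c \<otimes> (c [^] j \<otimes> b)) - (g (c [^] j \<otimes> b) + g c - g \<one>))
        + (g (c [^] j \<otimes> b) - (g b + int j * (g c - g \<one>)))"
      by (simp add: algebra_simps)
    also have "int p dvd \<dots>"
      using affine[OF c, of "c [^] j \<otimes> b"] cG b Suc.IH
      by (intro dvd_add) (simp_all add: cong_iff_dvd_diff)
    finally show ?case .
  qed
  from dvd_add[OF this[of p] dvd_triv_left[of "int p" "g c - g \<one>"]]
  show ?thesis
    by (simp add: cong_iff_dvd_diff)
qed

lemma (in group) primitive_translation_pow:
  assumes H: "subgroup H G"
    and primitive: "\<And>a b. a \<in> carrier G \<Longrightarrow> b \<in> carrier G \<Longrightarrow>
      [D a b = g a + g b - g (a \<otimes> b)] (mod int p)"
    and translate: "\<And>c b. c \<in> H \<Longrightarrow> D c b = D \<one> b"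
    and c: "c \<in> H" and b: "b \<in> carrier G"
  shows "[g (c [^] p \<otimes> b) = g b] (mod int p)"
proof (rule cong_translation_by_pow[OF H _ c b])
  fix c b assume c: "c \<in> H" and b: "b \<in> carrier G"
  have cG: "c \<in> carrier G"
    using H c by (rule subgroup.mem_carrier)
  have "D c b = D \<one> b"
    using c by (rule translate)
  moreover have "[D \<one> b = g \<one>] (mod int p)"
    using primitive[OF one_closed b] b by simp
  ultimately have "[g c + g b - g (c \<otimes> b) = g \<one>] (mod int p)"
    using cong_trans[OF cong_sym[OF primitive[OF cG b]]] by simp
  moreover have "g (c \<otimes> b) - (g b + g c - g \<one>) = - (g c + g b - g (c \<otimes> b) - g \<one>)"
    by simp
  ultimately show "[g (c \<otimes> b) = g b + g c - g \<one>] (mod int p)"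
    unfolding cong_iff_dvd_diff by (simp only: dvd_minus_iff)
qed

lemma (in group) coboundary_FactGroupI:
  assumes B: "B \<lhd> G"
    and invariant: "\<And>c b. c \<in> B \<Longrightarrow> b \<in> carrier G \<Longrightarrow> [g (c \<otimes> b) = g b] (mod int p)"
    and cob: "\<And>a b. a \<in> carrier G \<Longrightarrow> b \<in> carrier G \<Longrightarrow>
      [F (B #> a) (B #> b) = g a + g b - g (a \<otimes> b)] (mod int p)"
  shows "coboundary (G Mod B) p F"
proof -
  have sub: "subgroup B G"
    using B by (rule normal_imp_subgroup)
  have rep: "[g a = g (coset_rep (B #> a))] (mod int p)" if a: "a \<in> carrier G" for a
  proof -
    obtain c where "c \<in> B" and "coset_rep (B #> a) = c \<otimes> a"
      using coset_rep_r_coset[OF sub a] .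
    with invariant a show ?thesis
      by (simp add: cong_sym)
  qed
  have "[F S T = g (coset_rep S) + g (coset_rep T) - g (coset_rep (S \<otimes>\<^bsub>G Mod B\<^esub> T))] (mod int p)"
    if ST: "S \<in> carrier (G Mod B)" "T \<in> carrier (G Mod B)" for S T
  proof -
    obtain a b where ab: "a \<in> carrier G" "b \<in> carrier G" "S = B #> a" "T = B #> b"
      using ST by (auto simp: carrier_FactGroup)
    have mult: "(B #> a) \<otimes>\<^bsub>G Mod B\<^esub> (B #> b) = B #> (a \<otimes> b)"
      using normal.rcos_sum[OF B] ab by simp
    have "[g a + g b - g (a \<otimes> b)
        = g (coset_rep (B #> a)) + g (coset_rep (B #> b)) - g (coset_rep (B #> (a \<otimes> b)))] (mod int p)"
      using ab by (intro cong_diff cong_add rep) auto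
    then show ?thesis
      unfolding ab(3,4) mult by (rule cong_trans[OF cob[OF ab(1,2)]])
  qed
  then show ?thesis
    unfolding coboundary_def by (intro exI[of _ "\<lambda>S. g (coset_rep S)"]) blast
qed

section \<open>Inflation from a quotient\<close>

context factor_set
begin

lemma coboundary_on_pow_image:
  assumes A: "subgroup A G" and inj: "inj_on (\<lambda>c. c [^] m) A" and pm: "int p dvd int m"
  obtains g where "\<And>b1 b2. b1 \<in> (\<lambda>c. c [^] m) ` A \<Longrightarrow> b2 \<in> (\<lambda>c. c [^] m) ` A \<Longrightarrow>
    int p dvd f b1 b2 - (g b1 + g b2 - g (b1 \<otimes> b2))"
proof -
  define root where "root = the_inv_into A (\<lambda>c. c [^] m)"
  define g where "g b = f \<one> \<one> - pow_defect m (root b)" for b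
  have "int p dvd f b1 b2 - (g b1 + g b2 - g (b1 \<otimes> b2))"
    if b: "b1 \<in> (\<lambda>c. c [^] m) ` A" "b2 \<in> (\<lambda>c. c [^] m) ` A" for b1 b2
  proof -
    obtain c1 c2 where c: "c1 \<in> A" "c2 \<in> A" "b1 = c1 [^] m" "b2 = c2 [^] m"
      using b by auto
    have cG: "c1 \<in> carrier G" "c2 \<in> carrier G"
      using c(1,2) subgroup.mem_carrier[OF A] by blast+
    have "b1 \<otimes> b2 = (c1 \<otimes> c2) [^] m"
      using c cG by (simp add: nat_pow_distrib)
    moreover have "root ((c1 \<otimes> c2) [^] m) = c1 \<otimes> c2" "root b1 = c1" "root b2 = c2"
      unfolding root_def c using the_inv_into_f_f[OF inj] c subgroup.m_closed[OF A] by auto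
    ultimately have "f b1 b2 - (g b1 + g b2 - g (b1 \<otimes> b2))
      = (f (c1 [^] m) (c2 [^] m) - (int m * f c1 c2 + pow_defect m (c1 \<otimes> c2)
          - pow_defect m c1 - pow_defect m c2 + f \<one> \<one>)) + int m * f c1 c2"
      unfolding g_def using c by simp
    also have "int p dvd \<dots>"
      using cocycle_pow_pow[OF cG] pm by (rule dvd_add[OF _ dvd_mult2])
    finally show ?thesis .
  qed
  then show ?thesis
    by (rule that)
qed

end

text \<open>Adding the coboundary of \<open>correction\<close> makes a factor set that is a coboundary on \<open>B\<close>
  invariant under translation by \<open>B\<close>; the correction is read off the decomposition
  \<open>v = \<beta> v \<otimes> rep v\<close>.\<close>

locale factor_set_trivial_on = factor_set +
  fixes B :: "'a set" and g :: "'a \<Rightarrow> int"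
  assumes B_subgroup: "subgroup B G"
    and trivial_on: "b1 \<in> B \<Longrightarrow> b2 \<in> B \<Longrightarrow> int p dvd f b1 b2 - (g b1 + g b2 - g (b1 \<otimes> b2))"
begin

definition rep :: "'a \<Rightarrow> 'a" where "rep v = coset_rep (B #> v)"

definition \<beta> :: "'a \<Rightarrow> 'a" where "\<beta> v = v \<otimes> inv (rep v)"

definition correction :: "'a \<Rightarrow> int" where "correction v = f (\<beta> v) (rep v) - g (\<beta> v)"

lemma rep_decomp:
  assumes v: "v \<in> carrier G"
  shows "rep v \<in> carrier G" and "\<beta> v \<in> B" and "v = \<beta> v \<otimes> rep v"
proof -
  obtain c where c: "c \<in> B" and r: "rep v = c \<otimes> v"
    using coset_rep_r_coset[OF B_subgroup v] unfolding rep_def .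
  have cG: "c \<in> carrier G"
    using c subgroup.mem_carrier[OF B_subgroup] by blast
  show "rep v \<in> carrier G"
    using r cG v by simp
  have "\<beta> v = inv c"
    unfolding \<beta>_def r using cG v by (simp add: inv_mult_group m_assoc[symmetric])
  then show "\<beta> v \<in> B"
    using c subgroup.m_inv_closed[OF B_subgroup] by simp
  show "v = \<beta> v \<otimes> rep v"
    unfolding \<beta>_def using \<open>rep v \<in> carrier G\<close> v by (simp add: m_assoc)
qed

lemma rep_translate:
  assumes c: "c \<in> B" and v: "v \<in> carrier G"
  shows "rep (c \<otimes> v) = rep v" and "\<beta> (c \<otimes> v) = c \<otimes> \<beta> v"
proof -
  have cG: "c \<in> carrier G"
    using c subgroup.mem_carrier[OF B_subgroup] by blast
  have "B #> (c \<otimes> v) = B #> v"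
    using c cG v subgroup.rcos_const[OF B_subgroup is_group c] subgroup.subset[OF B_subgroup]
    by (simp add: coset_mult_assoc[symmetric])
  then show r: "rep (c \<otimes> v) = rep v"
    unfolding rep_def by simp
  show "\<beta> (c \<otimes> v) = c \<otimes> \<beta> v"
    unfolding \<beta>_def r using cG v rep_decomp(1)[OF v] by (simp add: m_assoc)
qed

lemma correction_translate:
  assumes c: "c \<in> B" and v: "v \<in> carrier G"
  shows "int p dvd correction (c \<otimes> v) - correction v - (f c v - g c)"
proof -
  have cG: "c \<in> carrier G"
    using c subgroup.mem_carrier[OF B_subgroup] by blast
  note d = rep_decomp[OF v]
  have \<beta>G: "\<beta> v \<in> carrier G"
    using d(2) subgroup.mem_carrier[OF B_subgroup] by blast
  have "correction (c \<otimes> v) - correction v - (f c v - g c)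
    = (f c (\<beta> v) + f (c \<otimes> \<beta> v) (rep v) - f (\<beta> v) (rep v) - f c (\<beta> v \<otimes> rep v))
      - (f c (\<beta> v) - (g c + g (\<beta> v) - g (c \<otimes> \<beta> v)))"
    unfolding correction_def rep_translate[OF c v] using d(3) by simp
  also have "int p dvd \<dots>"
    using cocycle_identity[OF cG \<beta>G d(1)] trivial_on[OF c d(2)] by (rule dvd_diff)
  finally show ?thesis .
qed

lemma add_correction_invariant:
  assumes c: "c \<in> B" and a: "a \<in> carrier G" and b: "b \<in> carrier G"
  shows "int p dvd add_coboundary G f correction (c \<otimes> a) b - add_coboundary G f correction a b"
proof -
  have cG: "c \<in> carrier G"
    using c subgroup.mem_carrier[OF B_subgroup] by blast
  have "add_coboundary G f correction (c \<otimes> a) b - add_coboundary G f correction a b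
    = (f c a + f (c \<otimes> a) b - f a b - f c (a \<otimes> b))
      + (correction (c \<otimes> a) - correction a - (f c a - g c))
      - (correction (c \<otimes> (a \<otimes> b)) - correction (a \<otimes> b) - (f c (a \<otimes> b) - g c))"
    using cG a b by (simp add: add_coboundary_def m_assoc)
  also have "int p dvd \<dots>"
    using cocycle_identity[OF cG a b] correction_translate[OF c a]
      correction_translate[OF c m_closed[OF a b]]
    by (rule dvd_diff[OF dvd_add])
  finally show ?thesis .
qed

end

locale factor_set_invariant = factor_set +
  fixes B :: "'a set"
  assumes B_subgroup: "subgroup B G"
    and invariant: "c \<in> B \<Longrightarrow> a \<in> carrier G \<Longrightarrow> b \<in> carrier G \<Longrightarrow> int p dvd f (c \<otimes> a) b - f a b"
begin

definition descent :: "'a set \<Rightarrow> 'a set \<Rightarrow> int" where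
  "descent S T =
    (if S \<in> carrier (G Mod B) \<and> T \<in> carrier (G Mod B) then f (coset_rep S) (coset_rep T) else 0)"

lemma descent_cong:
  assumes a: "a \<in> carrier G" and b: "b \<in> carrier G"
  shows "int p dvd descent (B #> a) (B #> b) - f a b"
proof -
  obtain c d where c: "c \<in> B" "coset_rep (B #> a) = c \<otimes> a"
    and d: "d \<in> B" "coset_rep (B #> b) = d \<otimes> b"
    using coset_rep_r_coset[OF B_subgroup a] coset_rep_r_coset[OF B_subgroup b] by metis
  have G: "c \<in> carrier G" "d \<in> carrier G"
    using c d subgroup.mem_carrier[OF B_subgroup] by blast+
  have "B #> a \<in> carrier (G Mod B)" "B #> b \<in> carrier (G Mod B)"
    using a b by (auto simp: carrier_FactGroup)
  then have "descent (B #> a) (B #> b) - f a b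
    = (f (c \<otimes> a) (d \<otimes> b) - f a (d \<otimes> b)) + (f a (d \<otimes> b) - f (d \<otimes> b) a)
      + (f (d \<otimes> b) a - f b a) + (f b a - f a b)"
    unfolding descent_def c d by simp
  also have "int p dvd \<dots>"
    using invariant[OF c(1) a m_closed[OF G(2) b]] symmetric[OF a m_closed[OF G(2) b]]
      invariant[OF d(1) b a] symmetric[OF b a]
    by (rule dvd_add[OF dvd_add[OF dvd_add]])
  finally show ?thesis .
qed

lemma descent_symmetric:
  assumes "S \<in> carrier (G Mod B)" and "T \<in> carrier (G Mod B)"
  shows "int p dvd descent S T - descent T S"
proof -
  obtain a b where ab: "a \<in> carrier G" "b \<in> carrier G" "S = B #> a" "T = B #> b"
    using assms by (auto simp: carrier_FactGroup)
  have "descent S T - descent T S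
    = (descent (B #> a) (B #> b) - f a b) - (descent (B #> b) (B #> a) - f b a) + (f a b - f b a)"
    unfolding ab by simp
  also have "int p dvd \<dots>"
    using descent_cong[OF ab(1,2)] descent_cong[OF ab(2,1)] symmetric[OF ab(1,2)]
    by (rule dvd_add[OF dvd_diff])
  finally show ?thesis .
qed

lemma descent_cocycle_identity:
  assumes "S \<in> carrier (G Mod B)" and "T \<in> carrier (G Mod B)" and "U \<in> carrier (G Mod B)"
  shows "int p dvd descent S T + descent (S \<otimes>\<^bsub>G Mod B\<^esub> T) U - descent T U
    - descent S (T \<otimes>\<^bsub>G Mod B\<^esub> U)"
proof -
  obtain a b c where abc: "a \<in> carrier G" "b \<in> carrier G" "c \<in> carrier G"
    "S = B #> a" "T = B #> b" "U = B #> c"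
    using assms by (auto simp: carrier_FactGroup)
  have mult: "(B #> x) \<otimes>\<^bsub>G Mod B\<^esub> (B #> y) = B #> (x \<otimes> y)"
    if "x \<in> carrier G" "y \<in> carrier G" for x y
    using normal.rcos_sum[OF subgroup_imp_normal[OF B_subgroup] that] by simp
  have "descent S T + descent (S \<otimes>\<^bsub>G Mod B\<^esub> T) U - descent T U - descent S (T \<otimes>\<^bsub>G Mod B\<^esub> U)
    = (descent (B #> a) (B #> b) - f a b) + (descent (B #> (a \<otimes> b)) (B #> c) - f (a \<otimes> b) c)
      - (descent (B #> b) (B #> c) - f b c) - (descent (B #> a) (B #> (b \<otimes> c)) - f a (b \<otimes> c))
      + (f a b + f (a \<otimes> b) c - f b c - f a (b \<otimes> c))"
    unfolding abc using abc mult by simp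
  also have "int p dvd \<dots>"
    using descent_cong[OF abc(1,2)] descent_cong[OF m_closed[OF abc(1,2)] abc(3)]
      descent_cong[OF abc(2,3)] descent_cong[OF abc(1) m_closed[OF abc(2,3)]]
      cocycle_identity[OF abc(1-3)]
    by (rule dvd_add[OF dvd_diff[OF dvd_diff[OF dvd_add]]])
  finally show ?thesis .
qed

lemma descent_cocycles: "descent \<in> cocycles (G Mod B) p"
  unfolding cocycles_def cong_iff_dvd_diff using descent_symmetric descent_cocycle_identity
  by (auto simp: descent_def algebra_simps)

lemma ext_rel_pullback_descent: "(f, pullback G (\<lambda>a. B #> a) descent) \<in> ext_rel G p"
proof (rule ext_rel_of_cong[OF factor_set])
  show "pullback G (\<lambda>a. B #> a) descent \<in> cocycles G p"
    using pullback_cocycles[OF descent_cocycles normal.r_coset_hom_Mod is_monoid]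
      B_subgroup subgroup_imp_normal by blast
  show "\<forall>a\<in>carrier G. \<forall>b\<in>carrier G. [f a b = pullback G (\<lambda>a. B #> a) descent a b] (mod int p)"
    using descent_cong unfolding pullback_def cong_iff_dvd_diff by (auto simp: dvd_diff_commute)
qed

end

lemma (in factor_set) inflated_if_coboundary_on:
  assumes B: "subgroup B G"
    and trivial_on: "\<And>b1 b2. b1 \<in> B \<Longrightarrow> b2 \<in> B \<Longrightarrow> int p dvd f b1 b2 - (g b1 + g b2 - g (b1 \<otimes> b2))"
  obtains F where "F \<in> cocycles (G Mod B) p" and "(f, pullback G (\<lambda>a. B #> a) F) \<in> ext_rel G p"
proof -
  interpret T: factor_set_trivial_on G p f B g
    using B trivial_on by unfold_locales (auto simp: subgroup_def)
  interpret I: factor_set_invariant G p "add_coboundary G f T.correction" B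
    using B add_coboundary_cocycles T.add_correction_invariant
    by unfold_locales (auto simp: subgroup_def)
  show ?thesis
    using that I.descent_cocycles
      ext_rel_trans[OF ext_rel_add_coboundary I.ext_rel_pullback_descent] .
qed

section \<open>The tower \<open>V/p\<^sup>nV\<close> and the colimit\<close>

locale p_quotients = comm_group V for V :: "('a, 'b) monoid_scheme" (structure) +
  fixes p :: nat
begin

abbreviation pnV :: "nat \<Rightarrow> 'a set" where "pnV n \<equiv> ppow_sub V (p ^ n)"

abbreviation Q :: "nat \<Rightarrow> 'a set monoid" where "Q n \<equiv> quot_pn V p n"

abbreviation pr :: "nat \<Rightarrow> 'a \<Rightarrow> 'a set" where "pr n \<equiv> proj_pn V p n"

abbreviation tr :: "nat \<Rightarrow> 'a set \<Rightarrow> 'a set" where "tr n \<equiv> trans_pn V p n"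

lemma pnV_subgroup: "subgroup (pnV n) V"
  by (rule subgroup_ppow_sub)

lemma pnV_normal: "pnV n \<lhd> V"
  by (simp add: pnV_subgroup subgroup_imp_normal)

lemma pnV_antimono:
  assumes "n \<le> k"
  shows "pnV k \<subseteq> pnV n"
proof
  fix a assume "a \<in> pnV k"
  then obtain x where x: "x \<in> carrier V" and a: "a = x [^] (p ^ k)"
    unfolding ppow_sub_def by auto
  have "p ^ k = p ^ (k - n) * p ^ n"
    using assms by (metis le_add_diff_inverse2 power_add)
  then have "a = (x [^] (p ^ (k - n))) [^] (p ^ n)"
    using x a by (simp only: nat_pow_pow)
  then show "a \<in> pnV n"
    using ppow_subI[OF nat_pow_closed[OF x]] by (simp only:)
qed

lemma pnV_Suc:
  assumes "x \<in> pnV (Suc n)"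
  obtains z where "z \<in> pnV n" and "x = z [^] p"
proof -
  obtain y where y: "y \<in> carrier V" and x: "x = y [^] (p ^ Suc n)"
    using assms unfolding ppow_sub_def by auto
  have "p ^ Suc n = p ^ n * p"
    by (simp add: mult.commute)
  then have "x = (y [^] (p ^ n)) [^] p"
    using x y by (simp only: nat_pow_pow)
  then show ?thesis
    by (rule that[OF ppow_subI[OF y]])
qed

lemma pnV_add: "pnV (n + k) = (\<lambda>c. c [^] (p ^ k)) ` pnV n"
proof
  show "pnV (n + k) \<subseteq> (\<lambda>c. c [^] (p ^ k)) ` pnV n"
  proof
    fix x assume "x \<in> pnV (n + k)"
    then obtain y where y: "y \<in> carrier V" and "x = y [^] (p ^ (n + k))"
      unfolding ppow_sub_def by auto
    then have "x = (y [^] (p ^ n)) [^] (p ^ k)"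
      by (simp add: nat_pow_pow power_add)
    then show "x \<in> (\<lambda>c. c [^] (p ^ k)) ` pnV n"
      by (rule image_eqI[OF _ ppow_subI[OF y]])
  qed
  show "(\<lambda>c. c [^] (p ^ k)) ` pnV n \<subseteq> pnV (n + k)"
  proof
    fix x assume "x \<in> (\<lambda>c. c [^] (p ^ k)) ` pnV n"
    then obtain y where y: "y \<in> carrier V" and "x = (y [^] (p ^ n)) [^] (p ^ k)"
      unfolding ppow_sub_def by auto
    then have "x = y [^] (p ^ (n + k))"
      by (simp add: nat_pow_pow power_add)
    then show "x \<in> pnV (n + k)"
      using ppow_subI[OF y] by (simp only:)
  qed
qed

lemma Q_group: "group (Q n)"
  unfolding quot_pn_def by (rule normal.factorgroup_is_group[OF pnV_normal])

lemma pr_hom: "pr n \<in> hom V (Q n)"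
  unfolding quot_pn_def proj_pn_def by (rule normal.r_coset_hom_Mod[OF pnV_normal])

lemma carrier_Q: "carrier (Q n) = pr n ` carrier V"
  unfolding quot_pn_def proj_pn_def by (simp add: carrier_FactGroup)

lemma pr_pnV: "c \<in> pnV n \<Longrightarrow> pr n c = pnV n"
  unfolding proj_pn_def using subgroup.rcos_const[OF pnV_subgroup is_group] by simp

lemma tr_pr:
  assumes "n \<le> k" and "a \<in> carrier V"
  shows "tr n (pr k a) = pr n a"
proof -
  have "pnV n <#> pnV k = pnV n"
    by (rule set_mult_subgroup_idem[OF pnV_subgroup
          subgroup_incl[OF pnV_subgroup pnV_subgroup pnV_antimono[OF assms(1)]]])
  then show ?thesis
    unfolding trans_pn_def proj_pn_def
    using setmult_rcos_assoc[of "pnV n" "pnV k" a] subgroup.subset[OF pnV_subgroup] assms(2)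
    by simp
qed

lemma tr_hom:
  assumes "n \<le> k"
  shows "tr n \<in> hom (Q k) (Q n)"
proof (rule homI)
  fix S T assume "S \<in> carrier (Q k)" and "T \<in> carrier (Q k)"
  then obtain a b where "a \<in> carrier V" "b \<in> carrier V" "S = pr k a" "T = pr k b"
    unfolding carrier_Q by auto
  with assms show "tr n S \<in> carrier (Q n)" and "tr n (S \<otimes>\<^bsub>Q k\<^esub> T) = tr n S \<otimes>\<^bsub>Q n\<^esub> tr n T"
    by (simp_all add: carrier_Q tr_pr hom_mult[OF pr_hom, symmetric])
qed

lemma pullback_tr_self:
  assumes "F \<in> cocycles (Q n) p"
  shows "pullback (Q n) (tr n) F = F"
proof (intro ext)
  fix S T
  show "pullback (Q n) (tr n) F S T = F S T"
  proof (cases "S \<in> carrier (Q n) \<and> T \<in> carrier (Q n)")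
    case True
    then show ?thesis
      unfolding pullback_def carrier_Q by (auto simp: tr_pr)
  next
    case False
    with assms show ?thesis
      unfolding pullback_def cocycles_def by auto
  qed
qed

lemma pullback_tr_tr:
  "n \<le> m \<Longrightarrow> m \<le> k \<Longrightarrow> pullback (Q k) (tr m) (pullback (Q m) (tr n) F) = pullback (Q k) (tr n) F"
  by (rule pullback_pullback) (auto simp: carrier_Q tr_pr)

lemma pullback_pr_tr:
  "n \<le> k \<Longrightarrow> pullback V (pr k) (pullback (Q k) (tr n) F) = pullback V (pr n) F"
  by (rule pullback_pullback) (auto simp: carrier_Q tr_pr)

lemma pullback_pr_cocycles: "F \<in> cocycles (Q n) p \<Longrightarrow> pullback V (pr n) F \<in> cocycles V p"
  by (rule pullback_cocycles[OF _ pr_hom is_monoid])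

lemma pullback_tr_cocycles:
  "n \<le> k \<Longrightarrow> F \<in> cocycles (Q n) p \<Longrightarrow> pullback (Q k) (tr n) F \<in> cocycles (Q k) p"
  by (rule pullback_cocycles[OF _ tr_hom group.is_monoid[OF Q_group]])

lemma pullback_tr_ext_rel:
  "n \<le> k \<Longrightarrow> (F, F') \<in> ext_rel (Q n) p \<Longrightarrow>
    (pullback (Q k) (tr n) F, pullback (Q k) (tr n) F') \<in> ext_rel (Q k) p"
  by (rule pullback_ext_rel[OF _ tr_hom group.is_monoid[OF Q_group]])

abbreviation colim_index :: "(nat \<times> ('a set \<Rightarrow> 'a set \<Rightarrow> int)) set" where
  "colim_index \<equiv> SIGMA n:UNIV. cocycles (Q n) p"

lemma trans_colim_rel: "trans (colim_rel V p)"
proof (rule transI)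
  fix x y z assume "(x, y) \<in> colim_rel V p" and "(y, z) \<in> colim_rel V p"
  then obtain n F m G l H k1 k2 where xyz: "x = (n, F)" "y = (m, G)" "z = (l, H)"
    and F: "F \<in> cocycles (Q n) p" and H: "H \<in> cocycles (Q l) p"
    and k1: "max n m \<le> k1" and k2: "max m l \<le> k2"
    and r1: "(pullback (Q k1) (tr n) F, pullback (Q k1) (tr m) G) \<in> ext_rel (Q k1) p"
    and r2: "(pullback (Q k2) (tr m) G, pullback (Q k2) (tr l) H) \<in> ext_rel (Q k2) p"
    unfolding colim_rel_def by auto
  define k where "k = max k1 k2"
  have "(pullback (Q k) (tr n) F, pullback (Q k) (tr m) G) \<in> ext_rel (Q k) p"
    using pullback_tr_ext_rel[OF _ r1, of k] k1 by (simp add: k_def pullback_tr_tr)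
  moreover have "(pullback (Q k) (tr m) G, pullback (Q k) (tr l) H) \<in> ext_rel (Q k) p"
    using pullback_tr_ext_rel[OF _ r2, of k] k2 by (simp add: k_def pullback_tr_tr)
  ultimately have "(pullback (Q k) (tr n) F, pullback (Q k) (tr l) H) \<in> ext_rel (Q k) p"
    by (rule ext_rel_trans)
  moreover have "max n l \<le> k"
    using k1 k2 unfolding k_def by auto
  ultimately show "(x, z) \<in> colim_rel V p"
    unfolding colim_rel_def xyz using F H by blast
qed

lemma colim_rel_equiv: "equiv colim_index (colim_rel V p)"
proof (rule equivI)
  show "colim_rel V p \<subseteq> colim_index \<times> colim_index"
    unfolding colim_rel_def by auto
  show "refl_on colim_index (colim_rel V p)"
  proof (rule refl_onI)
    fix x assume "x \<in> colim_index"
    then obtain n F where x: "x = (n, F)" and F: "F \<in> cocycles (Q n) p"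
      by auto
    then have "(pullback (Q n) (tr n) F, pullback (Q n) (tr n) F) \<in> ext_rel (Q n) p"
      by (simp add: pullback_tr_self ext_rel_refl)
    with F show "(x, x) \<in> colim_rel V p"
      unfolding colim_rel_def x by force
  qed
  show "sym (colim_rel V p)"
  proof (rule symI)
    fix x y assume "(x, y) \<in> colim_rel V p"
    then obtain n F m G k where xy: "x = (n, F)" "y = (m, G)"
      and FG: "F \<in> cocycles (Q n) p" "G \<in> cocycles (Q m) p" and k: "max n m \<le> k"
      and r: "(pullback (Q k) (tr n) F, pullback (Q k) (tr m) G) \<in> ext_rel (Q k) p"
      unfolding colim_rel_def by auto
    from k have "max m n \<le> k"
      by simp
    with FG ext_rel_sym[OF r] show "(y, x) \<in> colim_rel V p"
      unfolding colim_rel_def xy by force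
  qed
  show "trans (colim_rel V p)"
    by (rule trans_colim_rel)
qed

lemma canon_map_class:
  assumes F: "F \<in> cocycles (Q n) p"
  shows "canon_map V p (colim_rel V p `` {(n, F)}) = ext_rel V p `` {pullback V (pr n) F}"
proof -
  define y where "y = (SOME y. y \<in> colim_rel V p `` {(n, F)})"
  have "((n, F), (n, F)) \<in> colim_rel V p"
    using colim_rel_equiv F unfolding equiv_def refl_on_def by blast
  then have "((n, F), y) \<in> colim_rel V p"
    unfolding y_def by (metis Image_singleton_iff someI)
  then obtain m G k where y: "y = (m, G)" and k: "max n m \<le> k" and
    r: "(pullback (Q k) (tr n) F, pullback (Q k) (tr m) G) \<in> ext_rel (Q k) p"
    unfolding colim_rel_def by (cases y) blast
  have "(pullback V (pr n) F, pullback V (pr m) G) \<in> ext_rel V p"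
    using pullback_ext_rel[OF r pr_hom is_monoid] k by (simp add: pullback_pr_tr)
  then have "ext_rel V p `` {pullback V (pr m) G} = ext_rel V p `` {pullback V (pr n) F}"
    by (rule equiv_class_eq[OF ext_rel_equiv ext_rel_sym])
  then show ?thesis
    unfolding canon_map_def Let_def y_def[symmetric] y by simp
qed

text \<open>The primitive is affine modulo \<open>p\<close> along \<open>p\<^bsup>max n m\<^esup>V\<close>, hence invariant modulo \<open>p\<close>
  under its \<open>p\<close>-th powers.\<close>

lemma primitive_of_inflations:
  assumes r: "(pullback V (pr n) F, pullback V (pr m) G) \<in> ext_rel V p"
  obtains g where
    "\<And>a b. a \<in> carrier V \<Longrightarrow> b \<in> carrier V \<Longrightarrow>
      [F (pr n a) (pr n b) - G (pr m a) (pr m b) = g a + g b - g (a \<otimes> b)] (mod int p)"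
    and "\<And>c b. c \<in> pnV (Suc (max n m)) \<Longrightarrow> b \<in> carrier V \<Longrightarrow> [g (c \<otimes> b) = g b] (mod int p)"
proof -
  obtain g where "\<forall>a\<in>carrier V. \<forall>b\<in>carrier V.
      [pullback V (pr n) F a b - pullback V (pr m) G a b = g a + g b - g (a \<otimes> b)] (mod int p)"
    using r unfolding ext_rel_def coboundary_def by auto
  moreover define D where "D a b = F (pr n a) (pr n b) - G (pr m a) (pr m b)" for a b
  ultimately have D: "[D a b = g a + g b - g (a \<otimes> b)] (mod int p)"
    if "a \<in> carrier V" "b \<in> carrier V" for a b
    using that unfolding pullback_def D_def by auto
  have translate: "D c b = D \<one> b" if "c \<in> pnV (max n m)" for c b
  proof -
    have "c \<in> pnV n" and "c \<in> pnV m"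
      using that pnV_antimono[of n "max n m"] pnV_antimono[of m "max n m"] by auto
    then show ?thesis
      unfolding D_def using pr_pnV subgroup.one_closed[OF pnV_subgroup] by simp
  qed
  have "[g (c \<otimes> b) = g b] (mod int p)" if c: "c \<in> pnV (Suc (max n m))" and b: "b \<in> carrier V" for c b
  proof -
    obtain z where "z \<in> pnV (max n m)" and "c = z [^] p"
      using c by (rule pnV_Suc)
    with b show ?thesis
      using primitive_translation_pow[OF pnV_subgroup D translate] by blast
  qed
  with D show ?thesis
    unfolding D_def by (rule that)
qed

lemma colim_rel_if_cohomologous:
  assumes F: "F \<in> cocycles (Q n) p" and G: "G \<in> cocycles (Q m) p"
    and r: "(pullback V (pr n) F, pullback V (pr m) G) \<in> ext_rel V p"
  shows "((n, F), (m, G)) \<in> colim_rel V p"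
proof -
  define k where "k = Suc (max n m)"
  have "n \<le> k" and "m \<le> k"
    unfolding k_def by auto
  obtain g where D: "\<And>a b. a \<in> carrier V \<Longrightarrow> b \<in> carrier V \<Longrightarrow>
      [F (pr n a) (pr n b) - G (pr m a) (pr m b) = g a + g b - g (a \<otimes> b)] (mod int p)"
    and invariant: "\<And>c b. c \<in> pnV k \<Longrightarrow> b \<in> carrier V \<Longrightarrow> [g (c \<otimes> b) = g b] (mod int p)"
    using primitive_of_inflations[OF r] unfolding k_def by blast
  have "coboundary (Q k) p (\<lambda>S T. pullback (Q k) (tr n) F S T - pullback (Q k) (tr m) G S T)"
    unfolding quot_pn_def
  proof (rule coboundary_FactGroupI[OF pnV_normal invariant])
    fix a b assume "a \<in> carrier V" "b \<in> carrier V"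
    with \<open>n \<le> k\<close> \<open>m \<le> k\<close> show "[pullback (V Mod pnV k) (tr n) F (pnV k #> a) (pnV k #> b)
        - pullback (V Mod pnV k) (tr m) G (pnV k #> a) (pnV k #> b) = g a + g b - g (a \<otimes> b)] (mod int p)"
      using D[of a b] pr_hom[of k]
      by (simp add: pullback_def tr_pr hom_in_carrier flip: quot_pn_def proj_pn_def)
  qed auto
  with F G \<open>n \<le> k\<close> \<open>m \<le> k\<close>
  have "(pullback (Q k) (tr n) F, pullback (Q k) (tr m) G) \<in> ext_rel (Q k) p"
    unfolding ext_rel_def by (auto intro: pullback_tr_cocycles)
  with F G \<open>n \<le> k\<close> \<open>m \<le> k\<close> show ?thesis
    unfolding colim_rel_def by (auto intro!: exI[of _ k])
qed

lemma colim_Ext1_cases: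
  assumes "S \<in> colim_Ext1 V p"
  obtains n F where "F \<in> cocycles (Q n) p" and "S = colim_rel V p `` {(n, F)}"
  using assms unfolding colim_Ext1_def by (auto elim!: quotientE)

lemma canon_map_into_Ext1: "canon_map V p ` colim_Ext1 V p \<subseteq> Ext1 V p"
proof
  fix E assume "E \<in> canon_map V p ` colim_Ext1 V p"
  then obtain n F where "F \<in> cocycles (Q n) p" and "E = canon_map V p (colim_rel V p `` {(n, F)})"
    by (auto elim: colim_Ext1_cases)
  then show "E \<in> Ext1 V p"
    unfolding Ext1_def by (simp add: canon_map_class pullback_pr_cocycles quotientI)
qed

lemma inj_on_canon_map: "inj_on (canon_map V p) (colim_Ext1 V p)"
proof (rule inj_onI)
  fix S T assume "S \<in> colim_Ext1 V p" and "T \<in> colim_Ext1 V p"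
    and eq: "canon_map V p S = canon_map V p T"
  then obtain n F m G where F: "F \<in> cocycles (Q n) p" "S = colim_rel V p `` {(n, F)}"
    and G: "G \<in> cocycles (Q m) p" "T = colim_rel V p `` {(m, G)}"
    by (metis colim_Ext1_cases)
  have "ext_rel V p `` {pullback V (pr n) F} = ext_rel V p `` {pullback V (pr m) G}"
    using eq F G by (simp add: canon_map_class)
  then have "(pullback V (pr n) F, pullback V (pr m) G) \<in> ext_rel V p"
    using eq_equiv_class_iff[OF ext_rel_equiv pullback_pr_cocycles[OF F(1)]
        pullback_pr_cocycles[OF G(1)]]
    by simp
  then have "((n, F), (m, G)) \<in> colim_rel V p"
    using F(1) G(1) by (rule colim_rel_if_cohomologous[rotated 2])
  then show "S = T"
    using F(2) G(2) equiv_class_eq[OF colim_rel_equiv] by simp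
qed

definition inflated :: "('a \<Rightarrow> 'a \<Rightarrow> int) \<Rightarrow> bool" where
  "inflated f \<longleftrightarrow> (\<exists>n. \<exists>F\<in>cocycles (Q n) p. (f, pullback V (pr n) F) \<in> ext_rel V p)"

lemma canon_map_image_iff:
  assumes f: "f \<in> cocycles V p"
  shows "ext_rel V p `` {f} \<in> canon_map V p ` colim_Ext1 V p \<longleftrightarrow> inflated f"
  unfolding inflated_def
proof
  assume "ext_rel V p `` {f} \<in> canon_map V p ` colim_Ext1 V p"
  then obtain S where S: "S \<in> colim_Ext1 V p" and eq: "ext_rel V p `` {f} = canon_map V p S"
    by blast
  obtain n F where F: "F \<in> cocycles (Q n) p" and "S = colim_rel V p `` {(n, F)}"
    using S by (rule colim_Ext1_cases)
  with eq have "ext_rel V p `` {f} = ext_rel V p `` {pullback V (pr n) F}"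
    by (simp add: canon_map_class)
  then have "(f, pullback V (pr n) F) \<in> ext_rel V p"
    using eq_equiv_class_iff[OF ext_rel_equiv f pullback_pr_cocycles[OF F]] by simp
  with F show "\<exists>n. \<exists>F\<in>cocycles (Q n) p. (f, pullback V (pr n) F) \<in> ext_rel V p"
    by blast
next
  assume "\<exists>n. \<exists>F\<in>cocycles (Q n) p. (f, pullback V (pr n) F) \<in> ext_rel V p"
  then obtain n F where F: "F \<in> cocycles (Q n) p" and r: "(f, pullback V (pr n) F) \<in> ext_rel V p"
    by blast
  have "colim_rel V p `` {(n, F)} \<in> colim_Ext1 V p"
    unfolding colim_Ext1_def using F by (auto intro: quotientI)
  moreover have "ext_rel V p `` {f} = canon_map V p (colim_rel V p `` {(n, F)})"
    using canon_map_class[OF F] equiv_class_eq[OF ext_rel_equiv r] by simp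
  ultimately show "ext_rel V p `` {f} \<in> canon_map V p ` colim_Ext1 V p"
    by (rule rev_image_eqI)
qed

lemma Ext1_subset_canon_map_iff:
  "Ext1 V p \<subseteq> canon_map V p ` colim_Ext1 V p \<longleftrightarrow> (\<forall>f\<in>cocycles V p. inflated f)"
proof
  assume sub: "Ext1 V p \<subseteq> canon_map V p ` colim_Ext1 V p"
  show "\<forall>f\<in>cocycles V p. inflated f"
  proof
    fix f assume f: "f \<in> cocycles V p"
    then have "ext_rel V p `` {f} \<in> Ext1 V p"
      unfolding Ext1_def by (rule quotientI)
    with sub f show "inflated f"
      using canon_map_image_iff by blast
  qed
next
  assume all: "\<forall>f\<in>cocycles V p. inflated f"
  show "Ext1 V p \<subseteq> canon_map V p ` colim_Ext1 V p"
  proof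
    fix E assume "E \<in> Ext1 V p"
    then obtain f where "f \<in> cocycles V p" and "E = ext_rel V p `` {f}"
      unfolding Ext1_def by (rule quotientE)
    with all show "E \<in> canon_map V p ` colim_Ext1 V p"
      using canon_map_image_iff by blast
  qed
qed

lemma inj_on_pow_pnV:
  assumes bound: "\<forall>x\<in>carrier V. (\<exists>m. x [^] (p ^ m) = \<one>) \<longrightarrow> x [^] (p ^ k) = \<one>"
  shows "inj_on (\<lambda>c. c [^] (p ^ k)) (pnV k)"
proof (rule inj_onI)
  fix c1 c2 assume c: "c1 \<in> pnV k" "c2 \<in> pnV k" and eq: "c1 [^] (p ^ k) = c2 [^] (p ^ k)"
  have G: "c1 \<in> carrier V" "c2 \<in> carrier V"
    using c subgroup.mem_carrier[OF pnV_subgroup] by blast+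
  have "c1 \<otimes> inv c2 \<in> pnV k"
    using c subgroup.m_closed[OF pnV_subgroup] subgroup.m_inv_closed[OF pnV_subgroup] by blast
  then obtain y where y: "y \<in> carrier V" and d: "c1 \<otimes> inv c2 = y [^] (p ^ k)"
    unfolding ppow_sub_def by auto
  have "y [^] (p ^ (k + k)) = (c1 \<otimes> inv c2) [^] (p ^ k)"
    using y d by (simp add: nat_pow_pow power_add)
  also have "\<dots> = \<one>"
    using G eq by (simp add: nat_pow_distrib nat_pow_inv)
  finally have "\<exists>m. y [^] (p ^ m) = \<one>"
    by (rule exI)
  then have "y [^] (p ^ k) = \<one>"
    by (rule bound[rule_format, OF y])
  with d have "c1 \<otimes> inv c2 = \<one>"
    by simp
  with G show "c1 = c2"
    using inv_solve_right'[of \<one> c1 c2] by simp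
qed

lemma p_torsion_bounded_Suc:
  assumes "p_torsion_bounded V p"
  obtains k where "\<forall>x\<in>carrier V. (\<exists>m. x [^] (p ^ m) = \<one>) \<longrightarrow> x [^] (p ^ Suc k) = \<one>"
proof -
  obtain k where k: "\<forall>x\<in>carrier V. (\<exists>m. x [^] (p ^ m) = \<one>) \<longrightarrow> x [^] (p ^ k) = \<one>"
    using assms unfolding p_torsion_bounded_def by blast
  have "x [^] (p ^ Suc k) = \<one>" if "x \<in> carrier V" "\<exists>m. x [^] (p ^ m) = \<one>" for x
  proof -
    have "x [^] (p ^ Suc k) = (x [^] (p ^ k)) [^] p"
      using that(1) by (simp add: nat_pow_pow mult.commute)
    with k that show ?thesis
      by simp
  qed
  then show ?thesis
    using that by blast
qed

lemma inflated_if_p_torsion_bounded: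
  assumes bounded: "p_torsion_bounded V p" and f: "f \<in> cocycles V p"
  shows "inflated f"
proof -
  interpret factor_set V p f
    using f by unfold_locales
  \<comment> \<open>an exponent \<open>Suc k\<close> rather than \<open>k\<close>, so that \<open>p\<close> divides \<open>p ^ Suc k\<close>\<close>
  obtain k where bound: "\<forall>x\<in>carrier V. (\<exists>m. x [^] (p ^ m) = \<one>) \<longrightarrow> x [^] (p ^ Suc k) = \<one>"
    using bounded by (rule p_torsion_bounded_Suc)
  have "int p dvd int (p ^ Suc k)"
    by simp
  then obtain g where g: "\<And>b1 b2. b1 \<in> (\<lambda>c. c [^] (p ^ Suc k)) ` pnV (Suc k) \<Longrightarrow>
      b2 \<in> (\<lambda>c. c [^] (p ^ Suc k)) ` pnV (Suc k) \<Longrightarrow> int p dvd f b1 b2 - (g b1 + g b2 - g (b1 \<otimes> b2))"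
    using coboundary_on_pow_image[OF pnV_subgroup inj_on_pow_pnV[OF bound]] by blast
  obtain F where "F \<in> cocycles (V Mod pnV (Suc k + Suc k)) p"
    and "(f, pullback V (\<lambda>a. pnV (Suc k + Suc k) #> a) F) \<in> ext_rel V p"
    using inflated_if_coboundary_on[OF pnV_subgroup g[folded pnV_add]] by blast
  then show ?thesis
    unfolding inflated_def quot_pn_def proj_pn_def by (intro exI[of _ "Suc k + Suc k"] bexI)
qed

end

section \<open>Homomorphisms to \<open>\<rat>/\<int>\<close>\<close>

lemma chain_subset_upper_bound:
  assumes "chain\<^sub>\<subseteq> C" and "A \<in> C" and "B \<in> C"
  obtains D where "D \<in> C" and "A \<subseteq> D" and "B \<subseteq> D"
proof -
  from assms consider "A \<subseteq> B" | "B \<subseteq> A"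
    unfolding chain_subset_def by blast
  then show ?thesis
    using that assms(2,3) by cases auto
qed

lemma single_valued_Union_chain:
  assumes ch: "chain\<^sub>\<subseteq> C" and sv: "\<And>R. R \<in> C \<Longrightarrow> single_valued R"
  shows "single_valued (\<Union>C)"
proof (rule single_valuedI)
  fix a r s assume "(a, r) \<in> \<Union>C" and "(a, s) \<in> \<Union>C"
  then obtain R1 R2 where R: "R1 \<in> C" "R2 \<in> C" "(a, r) \<in> R1" "(a, s) \<in> R2"
    by blast
  obtain R where "R \<in> C" "R1 \<subseteq> R" "R2 \<subseteq> R"
    using chain_subset_upper_bound[OF ch R(1,2)] .
  with R have "(a, r) \<in> R" and "(a, s) \<in> R"
    by blast+
  then show "r = s"
    by (rule single_valuedD[OF sv[OF \<open>R \<in> C\<close>]])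
qed

lemma chain_subset_Domain:
  assumes "chain\<^sub>\<subseteq> C"
  shows "chain\<^sub>\<subseteq> (Domain ` C)"
  unfolding chain_subset_def
proof (intro ballI)
  fix A B assume "A \<in> Domain ` C" and "B \<in> Domain ` C"
  then obtain R S where "R \<in> C" "S \<in> C" and AB: "A = Domain R" "B = Domain S"
    by blast
  with assms have "R \<subseteq> S \<or> S \<subseteq> R"
    unfolding chain_subset_def by blast
  then show "A \<subseteq> B \<or> B \<subseteq> A"
    unfolding AB by (metis Domain_mono)
qed

lemma (in group) subgroup_Union_chain:
  assumes ne: "C \<noteq> {}" and ch: "chain\<^sub>\<subseteq> C" and sub: "\<And>H. H \<in> C \<Longrightarrow> subgroup H G"
  shows "subgroup (\<Union>C) G"
proof (rule subgroupI)
  show "\<Union>C \<subseteq> carrier G"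
  proof
    fix a assume "a \<in> \<Union>C"
    then obtain H where "H \<in> C" and "a \<in> H"
      by blast
    then show "a \<in> carrier G"
      by (rule subgroup.mem_carrier[OF sub])
  qed
  obtain H where "H \<in> C"
    using ne by blast
  then have "\<one> \<in> H"
    by (rule subgroup.one_closed[OF sub])
  with \<open>H \<in> C\<close> show "\<Union>C \<noteq> {}"
    by blast
next
  fix a assume "a \<in> \<Union>C"
  then obtain H where "H \<in> C" and "a \<in> H"
    by blast
  then have "inv a \<in> H"
    by (rule subgroup.m_inv_closed[OF sub])
  with \<open>H \<in> C\<close> show "inv a \<in> \<Union>C"
    by blast
next
  fix a b assume "a \<in> \<Union>C" and "b \<in> \<Union>C"
  then obtain H1 H2 where H: "H1 \<in> C" "H2 \<in> C" "a \<in> H1" "b \<in> H2"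
    by blast
  obtain H where "H \<in> C" "H1 \<subseteq> H" "H2 \<subseteq> H"
    using chain_subset_upper_bound[OF ch H(1,2)] .
  with H have "a \<in> H" and "b \<in> H"
    by blast+
  then have "a \<otimes> b \<in> H"
    by (rule subgroup.m_closed[OF sub[OF \<open>H \<in> C\<close>]])
  with \<open>H \<in> C\<close> show "a \<otimes> b \<in> \<Union>C"
    by blast
qed

context comm_group
begin

text \<open>Homomorphisms to \<open>\<rat>/\<int>\<close> are represented by rational-valued lifts.\<close>

definition qz_hom :: "'a set \<Rightarrow> ('a \<Rightarrow> rat) \<Rightarrow> bool" where
  "qz_hom H \<Psi> \<longleftrightarrow> subgroup H G \<and> (\<forall>a\<in>H. \<forall>b\<in>H. \<Psi> a + \<Psi> b - \<Psi> (a \<otimes> b) \<in> \<int>)"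

lemma qz_homD: "qz_hom H \<Psi> \<Longrightarrow> a \<in> H \<Longrightarrow> b \<in> H \<Longrightarrow> \<Psi> a + \<Psi> b - \<Psi> (a \<otimes> b) \<in> \<int>"
  unfolding qz_hom_def by blast

lemma qz_hom_subgroup: "qz_hom H \<Psi> \<Longrightarrow> subgroup H G"
  unfolding qz_hom_def by blast

lemma qz_hom_one:
  assumes "qz_hom H \<Psi>"
  shows "\<Psi> \<one> \<in> \<int>"
proof -
  have "\<one> \<in> H"
    using qz_hom_subgroup[OF assms] by (rule subgroup.one_closed)
  from qz_homD[OF assms this this] show ?thesis
    by simp
qed

lemma qz_hom_trivial: "qz_hom {\<one>} (\<lambda>_. 0)"
  unfolding qz_hom_def using triv_subgroup by simp

lemma qz_hom_nat_pow:
  assumes h: "qz_hom H \<Psi>" and a: "a \<in> H"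
  shows "\<Psi> (a [^] (n::nat)) - of_nat n * \<Psi> a \<in> \<int>"
proof (induction n)
  case 0
  then show ?case using qz_hom_one[OF h] by simp
next
  case (Suc n)
  have "a [^] n \<in> H"
    using subgroup_nat_pow_closed[OF qz_hom_subgroup[OF h] a] .
  then have "\<Psi> (a [^] n) + \<Psi> a - \<Psi> (a [^] n \<otimes> a) \<in> \<int>"
    using qz_homD[OF h _ a] by blast
  moreover have "\<Psi> (a [^] Suc n) - of_nat (Suc n) * \<Psi> a
    = (\<Psi> (a [^] n) - of_nat n * \<Psi> a) - (\<Psi> (a [^] n) + \<Psi> a - \<Psi> (a [^] n \<otimes> a))"
    by (simp add: algebra_simps)
  ultimately show ?case
    using Suc.IH by (simp only: Ints_diff)
qed

lemma qz_hom_inv: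
  assumes h: "qz_hom H \<Psi>" and a: "a \<in> H"
  shows "\<Psi> (inv a) + \<Psi> a \<in> \<int>"
proof -
  have sub: "subgroup H G"
    using h by (rule qz_hom_subgroup)
  have "\<Psi> (inv a) + \<Psi> a - \<Psi> (inv a \<otimes> a) \<in> \<int>"
    using qz_homD[OF h subgroup.m_inv_closed[OF sub a] a] .
  then have "\<Psi> (inv a) + \<Psi> a - \<Psi> \<one> \<in> \<int>"
    using subgroup.mem_carrier[OF sub a] by simp
  from Ints_add[OF this qz_hom_one[OF h]] show ?thesis
    by simp
qed

lemma qz_hom_int_pow:
  assumes h: "qz_hom H \<Psi>" and a: "a \<in> H"
  shows "\<Psi> (a [^] (k::int)) - of_int k * \<Psi> a \<in> \<int>"
proof (cases "k \<ge> 0")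
  case True
  then have "a [^] k = a [^] nat k"
    using int_pow_int[of G a "nat k"] by simp
  with True show ?thesis
    using qz_hom_nat_pow[OF h a, of "nat k"] by simp
next
  case False
  define n where "n = nat (- k)"
  have aG: "a \<in> carrier G"
    using subgroup.mem_carrier[OF qz_hom_subgroup[OF h] a] .
  have k: "k = - int n"
    using False n_def by simp
  have an: "a [^] n \<in> H"
    using subgroup_nat_pow_closed[OF qz_hom_subgroup[OF h] a] .
  have "\<Psi> (a [^] k) - of_int k * \<Psi> a
    = (\<Psi> (inv (a [^] n)) + \<Psi> (a [^] n)) - (\<Psi> (a [^] n) - of_nat n * \<Psi> a)"
    unfolding k using aG by (simp add: int_pow_neg_int)
  also have "\<dots> \<in> \<int>"
    using qz_hom_inv[OF h an] qz_hom_nat_pow[OF h a] by (rule Ints_diff)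
  finally show ?thesis .
qed

lemma qz_hom_inv_mult:
  assumes h: "qz_hom H \<Psi>" and a: "a \<in> H" and b: "b \<in> H"
  shows "\<Psi> (inv a \<otimes> b) - (\<Psi> b - \<Psi> a) \<in> \<int>"
proof -
  have "\<Psi> (inv a \<otimes> b) - (\<Psi> b - \<Psi> a)
    = (\<Psi> (inv a) + \<Psi> a) - (\<Psi> (inv a) + \<Psi> b - \<Psi> (inv a \<otimes> b))"
    by simp
  also have "\<dots> \<in> \<int>"
    using qz_hom_inv[OF h a] qz_homD[OF h subgroup.m_inv_closed[OF qz_hom_subgroup[OF h] a] b]
    by (rule Ints_diff)
  finally show ?thesis .
qed

lemma int_pow_mem_subgroup_iff:
  assumes H: "subgroup H G" and v: "v \<in> carrier G"
  shows "v [^] (k::int) \<in> H \<longleftrightarrow> int (group.ord (G Mod H) (H #> v)) dvd k"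
proof -
  have N: "H \<lhd> G"
    using H by (rule subgroup_imp_normal)
  have "v [^] k \<in> H \<longleftrightarrow> H #> v [^] k = H"
    using coset_join1[OF _ _ H] coset_join2[OF _ H] v by blast
  also have "\<dots> \<longleftrightarrow> (H #> v) [^]\<^bsub>G Mod H\<^esub> k = \<one>\<^bsub>G Mod H\<^esub>"
    using normal.FactGroup_int_pow[OF N v] by simp
  also have "\<dots> \<longleftrightarrow> int (group.ord (G Mod H) (H #> v)) dvd k"
    using group.int_pow_eq_id[OF normal.factorgroup_is_group[OF N]] v
    by (simp add: carrier_FactGroup)
  finally show ?thesis .
qed

text \<open>This is where divisibility of \<open>\<rat>/\<int>\<close> enters: the value is \<open>\<Psi>(v\<^sup>d)/d\<close> for the
  order \<open>d\<close> of \<open>v\<close> modulo \<open>H\<close>.\<close>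

lemma qz_hom_compatible_value:
  assumes h: "qz_hom H \<Psi>" and v: "v \<in> carrier G"
  obtains q where "\<And>k::int. v [^] k \<in> H \<Longrightarrow> of_int k * q - \<Psi> (v [^] k) \<in> \<int>"
proof -
  define d where "d = group.ord (G Mod H) (H #> v)"
  have mem: "v [^] k \<in> H \<longleftrightarrow> int d dvd k" for k :: int
    unfolding d_def by (rule int_pow_mem_subgroup_iff[OF qz_hom_subgroup[OF h] v])
  have "of_int k * (\<Psi> (v [^] int d) / of_nat d) - \<Psi> (v [^] k) \<in> \<int>" if k: "v [^] k \<in> H" for k :: int
  proof -
    obtain t where t: "k = int d * t"
      using k mem by blast
    show ?thesis
    proof (cases "d = 0")
      case True
      then show ?thesis
        using t qz_hom_one[OF h] by simp
    next
      case False
      have "v [^] int d \<in> H"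
        using mem by simp
      then have "\<Psi> ((v [^] int d) [^] t) - of_int t * \<Psi> (v [^] int d) \<in> \<int>"
        by (rule qz_hom_int_pow[OF h])
      moreover have "(v [^] int d) [^] t = v [^] k"
        using t v by (simp add: int_pow_pow)
      moreover have "of_int k * (\<Psi> (v [^] int d) / of_nat d) = of_int t * \<Psi> (v [^] int d)"
        using t False by simp
      ultimately show ?thesis
        using Ints_minus by (metis minus_diff_eq)
    qed
  qed
  then show ?thesis
    by (rule that)
qed

definition adjoin :: "'a set \<Rightarrow> 'a \<Rightarrow> 'a set" where
  "adjoin H v = {h \<otimes> v [^] (k::int) | h k. h \<in> H}"

lemma subset_adjoin: "subgroup H G \<Longrightarrow> H \<subseteq> adjoin H v"
  unfolding adjoin_def by (force intro: exI[of _ 0] dest: subgroup.mem_carrier)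

lemma mem_adjoin: "subgroup H G \<Longrightarrow> v \<in> carrier G \<Longrightarrow> v \<in> adjoin H v"
  unfolding adjoin_def by (force intro: exI[of _ 1] subgroup.one_closed)

lemma subgroup_adjoin:
  assumes H: "subgroup H G" and v: "v \<in> carrier G"
  shows "subgroup (adjoin H v) G"
proof (rule subgroupI)
  show "adjoin H v \<subseteq> carrier G"
    unfolding adjoin_def using subgroup.mem_carrier[OF H] v by auto
  show "adjoin H v \<noteq> {}"
    using mem_adjoin[OF H v] by blast
next
  fix a assume "a \<in> adjoin H v"
  then obtain h and k :: int where hk: "h \<in> H" "a = h \<otimes> v [^] k"
    unfolding adjoin_def by blast
  then have "inv a = inv h \<otimes> v [^] (- k)"
    using subgroup.mem_carrier[OF H hk(1)] v by (simp add: inv_mult int_pow_neg)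
  then show "inv a \<in> adjoin H v"
    unfolding adjoin_def using subgroup.m_inv_closed[OF H hk(1)] by blast
next
  fix a b assume "a \<in> adjoin H v" and "b \<in> adjoin H v"
  then obtain h1 h2 and k1 k2 :: int where
    hk: "h1 \<in> H" "a = h1 \<otimes> v [^] k1" "h2 \<in> H" "b = h2 \<otimes> v [^] k2"
    unfolding adjoin_def by blast
  then have "a \<otimes> b = (h1 \<otimes> h2) \<otimes> v [^] (k1 + k2)"
    using subgroup.mem_carrier[OF H hk(1)] subgroup.mem_carrier[OF H hk(3)] v
    by (simp add: int_pow_mult m_ac)
  then show "a \<otimes> b \<in> adjoin H v"
    unfolding adjoin_def using subgroup.m_closed[OF H hk(1,3)] by blast
qed

lemma finite_adjoin:
  assumes fin: "finite H" and HG: "H \<subseteq> carrier G" and v: "v \<in> carrier G"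
    and n: "v [^] (n::nat) = \<one>" "0 < n"
  shows "finite (adjoin H v)"
proof -
  have "adjoin H v \<subseteq> (\<lambda>(h, i). h \<otimes> v [^] i) ` (H \<times> {..<n})"
  proof
    fix y assume "y \<in> adjoin H v"
    then obtain h and k :: int where hk: "h \<in> H" "y = h \<otimes> v [^] k"
      unfolding adjoin_def by blast
    define r where "r = k mod int n"
    have r: "0 \<le> r" "r < int n"
      using n(2) unfolding r_def by auto
    have "v [^] k = v [^] (int n * (k div int n) + r)"
      unfolding r_def by simp
    also have "\<dots> = (v [^] int n) [^] (k div int n) \<otimes> v [^] r"
      using v by (simp add: int_pow_mult int_pow_pow)
    also have "\<dots> = v [^] r"
      using v n(1) by (simp add: int_pow_int)
    also have "\<dots> = v [^] nat r"
      using r int_pow_int[of G v "nat r"] by simp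
    finally have "y = h \<otimes> v [^] nat r"
      using hk(2) by simp
    with hk(1) r show "y \<in> (\<lambda>(h, i). h \<otimes> v [^] i) ` (H \<times> {..<n})"
      by (intro image_eqI[of _ _ "(h, nat r)"]) auto
  qed
  moreover have "finite ((\<lambda>(h, i). h \<otimes> v [^] i) ` (H \<times> {..<n}))"
    using fin by simp
  ultimately show ?thesis
    by (rule finite_subset)
qed

definition adjoin_ext :: "'a set \<Rightarrow> ('a \<Rightarrow> rat) \<Rightarrow> 'a \<Rightarrow> rat \<Rightarrow> 'a \<Rightarrow> rat" where
  "adjoin_ext H \<Psi> v q y = (if y \<in> H then \<Psi> y else
    (let (h, k) = SOME (h, k). h \<in> H \<and> y = h \<otimes> v [^] (k::int) in \<Psi> h + of_int k * q))"

context
  fixes H \<Psi> v q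
  assumes h: "qz_hom H \<Psi>" and v: "v \<in> carrier G"
    and q: "\<And>k::int. v [^] k \<in> H \<Longrightarrow> of_int k * q - \<Psi> (v [^] k) \<in> \<int>"
begin

lemma adjoin_value_cong:
  assumes hH: "h \<in> H" "h' \<in> H" and e: "h \<otimes> v [^] k = h' \<otimes> v [^] k'"
  shows "(\<Psi> h + of_int k * q) - (\<Psi> h' + of_int k' * q) \<in> \<int>"
proof -
  have sub: "subgroup H G"
    using h by (rule qz_hom_subgroup)
  have hG: "h \<in> carrier G" "h' \<in> carrier G"
    using hH subgroup.mem_carrier[OF sub] by blast+
  have "v [^] (k - k') = inv h \<otimes> (h \<otimes> v [^] k) \<otimes> inv (v [^] k')"
    using hG v by (simp add: int_pow_diff m_assoc[symmetric])
  also have "\<dots> = inv h \<otimes> h'"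
    using hG v by (simp add: e m_assoc)
  finally have vk: "v [^] (k - k') = inv h \<otimes> h'" .
  then have "v [^] (k - k') \<in> H"
    using subgroup.m_closed[OF sub subgroup.m_inv_closed[OF sub hH(1)] hH(2)] by simp
  then have "of_int (k - k') * q - \<Psi> (inv h \<otimes> h') \<in> \<int>"
    using q vk by metis
  then have "(of_int (k - k') * q - \<Psi> (inv h \<otimes> h')) + (\<Psi> (inv h \<otimes> h') - (\<Psi> h' - \<Psi> h)) \<in> \<int>"
    using qz_hom_inv_mult[OF h hH] by (rule Ints_add)
  then show ?thesis
    by (simp add: algebra_simps)
qed

lemma adjoin_ext_cong:
  assumes hH: "h \<in> H" and y: "y = h \<otimes> v [^] k"
  shows "adjoin_ext H \<Psi> v q y - (\<Psi> h + of_int k * q) \<in> \<int>"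
proof (cases "y \<in> H")
  case True
  have "y \<otimes> v [^] (0::int) = h \<otimes> v [^] k"
    using True y subgroup.mem_carrier[OF qz_hom_subgroup[OF h]] by simp
  from adjoin_value_cong[OF True hH this] True show ?thesis
    unfolding adjoin_ext_def by simp
next
  case False
  define hk where "hk = (SOME (h, k). h \<in> H \<and> y = h \<otimes> v [^] (k::int))"
  have "\<exists>hk. (\<lambda>(h, k). h \<in> H \<and> y = h \<otimes> v [^] (k::int)) hk"
    using hH y by blast
  then have hk: "fst hk \<in> H" "y = fst hk \<otimes> v [^] snd hk"
    unfolding hk_def by (metis (mono_tags, lifting) case_prod_beta someI_ex)+
  have "adjoin_ext H \<Psi> v q y = \<Psi> (fst hk) + of_int (snd hk) * q"
    using False unfolding adjoin_ext_def hk_def[symmetric] by (simp add: case_prod_beta)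
  then show ?thesis
    using adjoin_value_cong[OF hk(1) hH] hk(2) y by simp
qed

lemma qz_hom_adjoin_ext: "qz_hom (adjoin H v) (adjoin_ext H \<Psi> v q)"
  unfolding qz_hom_def
proof (intro conjI ballI)
  have sub: "subgroup H G"
    using h by (rule qz_hom_subgroup)
  show "subgroup (adjoin H v) G"
    using sub v by (rule subgroup_adjoin)
  fix a b assume "a \<in> adjoin H v" and "b \<in> adjoin H v"
  then obtain h1 h2 and k1 k2 :: int where
    hk: "h1 \<in> H" "a = h1 \<otimes> v [^] k1" "h2 \<in> H" "b = h2 \<otimes> v [^] k2"
    unfolding adjoin_def by blast
  have "h1 \<in> carrier G" "h2 \<in> carrier G"
    using hk(1,3) subgroup.mem_carrier[OF sub] by blast+
  then have ab: "a \<otimes> b = (h1 \<otimes> h2) \<otimes> v [^] (k1 + k2)"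
    using hk(2,4) v by (simp add: int_pow_mult m_ac)
  let ?\<Psi>' = "adjoin_ext H \<Psi> v q"
  have "?\<Psi>' a + ?\<Psi>' b - ?\<Psi>' (a \<otimes> b)
    = (?\<Psi>' a - (\<Psi> h1 + of_int k1 * q)) + (?\<Psi>' b - (\<Psi> h2 + of_int k2 * q))
      - (?\<Psi>' (a \<otimes> b) - (\<Psi> (h1 \<otimes> h2) + of_int (k1 + k2) * q))
      + (\<Psi> h1 + \<Psi> h2 - \<Psi> (h1 \<otimes> h2))"
    by (simp add: algebra_simps)
  also have "\<dots> \<in> \<int>"
    using adjoin_ext_cong[OF hk(1,2)] adjoin_ext_cong[OF hk(3,4)]
      adjoin_ext_cong[OF subgroup.m_closed[OF sub hk(1,3)] ab] qz_homD[OF h hk(1,3)]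
    by (rule Ints_add[OF Ints_diff[OF Ints_add]])
  finally show "?\<Psi>' a + ?\<Psi>' b - ?\<Psi>' (a \<otimes> b) \<in> \<int>" .
qed

lemma adjoin_ext_restrict: "a \<in> H \<Longrightarrow> adjoin_ext H \<Psi> v q a = \<Psi> a"
  unfolding adjoin_ext_def by simp

lemma adjoin_ext_value: "adjoin_ext H \<Psi> v q v - q \<in> \<int>"
proof -
  have "v = \<one> \<otimes> v [^] (1::int)"
    using v by simp
  from adjoin_ext_cong[OF subgroup.one_closed[OF qz_hom_subgroup[OF h]] this]
  have "adjoin_ext H \<Psi> v q v - q - \<Psi> \<one> \<in> \<int>"
    by (simp add: algebra_simps)
  from Ints_add[OF this qz_hom_one[OF h]] show ?thesis
    by simp
qed

end

text \<open>Partial homomorphisms are handled through their graphs, so that Zorn's lemma applies to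
  the inclusion order.\<close>

definition qz_hom_graph :: "('a \<times> rat) set \<Rightarrow> bool" where
  "qz_hom_graph R \<longleftrightarrow> single_valued R \<and> subgroup (Domain R) G \<and>
     (\<forall>a b r s t. (a, r) \<in> R \<longrightarrow> (b, s) \<in> R \<longrightarrow> (a \<otimes> b, t) \<in> R \<longrightarrow> r + s - t \<in> \<int>)"

lemma qz_hom_graph_image:
  assumes "qz_hom H \<Psi>"
  shows "qz_hom_graph ((\<lambda>a. (a, \<Psi> a)) ` H)"
proof -
  have "Domain ((\<lambda>a. (a, \<Psi> a)) ` H) = H"
    by force
  with assms show ?thesis
    unfolding qz_hom_graph_def single_valued_def by (auto simp: qz_hom_subgroup qz_homD)
qed

lemma qz_hom_graph_the:
  assumes "qz_hom_graph R" and "(a, r) \<in> R"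
  shows "(THE r. (a, r) \<in> R) = r"
  using assms unfolding qz_hom_graph_def by (auto intro: the_equality dest: single_valuedD)

lemma qz_hom_of_graph:
  assumes g: "qz_hom_graph R"
  shows "qz_hom (Domain R) (\<lambda>a. THE r. (a, r) \<in> R)"
  unfolding qz_hom_def
proof (intro conjI ballI)
  show sub: "subgroup (Domain R) G"
    using g unfolding qz_hom_graph_def by blast
  fix a b assume "a \<in> Domain R" and "b \<in> Domain R"
  moreover from this have "a \<otimes> b \<in> Domain R"
    by (rule subgroup.m_closed[OF sub])
  ultimately obtain r s t where "(a, r) \<in> R" "(b, s) \<in> R" "(a \<otimes> b, t) \<in> R"
    by blast
  with g show "(THE r. (a, r) \<in> R) + (THE r. (b, r) \<in> R) - (THE r. (a \<otimes> b, r) \<in> R) \<in> \<int>"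
    unfolding qz_hom_graph_def by (simp add: qz_hom_graph_the[OF g])
qed

lemma qz_hom_graph_Union:
  assumes ne: "C \<noteq> {}" and graphs: "\<And>R. R \<in> C \<Longrightarrow> qz_hom_graph R" and ch: "chain\<^sub>\<subseteq> C"
  shows "qz_hom_graph (\<Union>C)"
  unfolding qz_hom_graph_def
proof (intro conjI allI impI)
  show "single_valued (\<Union>C)"
    using graphs unfolding qz_hom_graph_def by (blast intro: single_valued_Union_chain[OF ch])
  have "subgroup (\<Union>(Domain ` C)) G"
    using ne chain_subset_Domain[OF ch] graphs unfolding qz_hom_graph_def
    by (intro subgroup_Union_chain) auto
  then show "subgroup (Domain (\<Union>C)) G"
    by (simp add: Domain_Union)
  fix a b r s t assume abt: "(a, r) \<in> \<Union>C" "(b, s) \<in> \<Union>C" "(a \<otimes> b, t) \<in> \<Union>C"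
  then obtain R1 R2 R3 where
    R: "R1 \<in> C" "R2 \<in> C" "R3 \<in> C" "(a, r) \<in> R1" "(b, s) \<in> R2" "(a \<otimes> b, t) \<in> R3"
    by blast
  obtain R12 where R12: "R12 \<in> C" "R1 \<subseteq> R12" "R2 \<subseteq> R12"
    using chain_subset_upper_bound[OF ch R(1,2)] .
  obtain R where "R \<in> C" "R12 \<subseteq> R" "R3 \<subseteq> R"
    using chain_subset_upper_bound[OF ch R12(1) R(3)] .
  with R R12 graphs show "r + s - t \<in> \<int>"
    unfolding qz_hom_graph_def by blast
qed

lemma qz_hom_graph_maximal_total:
  assumes M: "qz_hom_graph M" and max: "\<And>R. qz_hom_graph R \<Longrightarrow> M \<subseteq> R \<Longrightarrow> R = M"
  shows "Domain M = carrier G"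
proof (rule ccontr)
  let ?\<Psi> = "\<lambda>a. THE r. (a, r) \<in> M"
  have h: "qz_hom (Domain M) ?\<Psi>"
    using M by (rule qz_hom_of_graph)
  have sub: "subgroup (Domain M) G"
    using h by (rule qz_hom_subgroup)
  assume "Domain M \<noteq> carrier G"
  then obtain v where v: "v \<in> carrier G" "v \<notin> Domain M"
    using subgroup.subset[OF sub] by blast
  obtain q where q: "\<And>k::int. v [^] k \<in> Domain M \<Longrightarrow> of_int k * q - ?\<Psi> (v [^] k) \<in> \<int>"
    using qz_hom_compatible_value[OF h v(1)] by blast
  let ?R = "(\<lambda>a. (a, adjoin_ext (Domain M) ?\<Psi> v q a)) ` adjoin (Domain M) v"
  have "M \<subseteq> ?R"
  proof
    fix x assume "x \<in> M"
    then obtain a r where x: "x = (a, r)" "(a, r) \<in> M"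
      by (cases x) auto
    then have a: "a \<in> Domain M"
      by blast
    then have "a \<in> adjoin (Domain M) v" and "adjoin_ext (Domain M) ?\<Psi> v q a = r"
      using subset_adjoin[OF sub] adjoin_ext_restrict[OF h v(1) q a] qz_hom_graph_the[OF M x(2)]
      by auto
    with x show "x \<in> ?R"
      by force
  qed
  then have "?R = M"
    using max qz_hom_graph_image[OF qz_hom_adjoin_ext[OF h v(1) q]] by blast
  then have "v \<in> Domain M"
    using mem_adjoin[OF sub v(1)] by force
  with v show False
    by blast
qed

lemma qz_hom_extend_to_carrier:
  assumes "qz_hom_graph R0"
  obtains \<Phi> where "qz_hom (carrier G) \<Phi>" and "\<And>a r. (a, r) \<in> R0 \<Longrightarrow> \<Phi> a = r"
proof -
  define \<A> where "\<A> = {R. qz_hom_graph R \<and> R0 \<subseteq> R}"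
  have "\<Union>C \<in> \<A>" if "C \<noteq> {}" and "subset.chain \<A> C" for C
  proof -
    have "C \<subseteq> \<A>" and "chain\<^sub>\<subseteq> C"
      using that(2) unfolding subset_chain_def chain_subset_def by auto
    then show ?thesis
      using qz_hom_graph_Union[OF that(1)] that(1) unfolding \<A>_def by blast
  qed
  moreover have "\<A> \<noteq> {}"
    using assms unfolding \<A>_def by blast
  ultimately obtain M where M: "M \<in> \<A>" and max: "\<And>R. R \<in> \<A> \<Longrightarrow> M \<subseteq> R \<Longrightarrow> R = M"
    using subset_Zorn_nonempty[of \<A>] by blast
  have g: "qz_hom_graph M" and R0: "R0 \<subseteq> M"
    using M unfolding \<A>_def by auto
  have "Domain M = carrier G"
    using g by (rule qz_hom_graph_maximal_total) (use R0 max in \<open>auto simp: \<A>_def\<close>)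
  show ?thesis
  proof (rule that)
    show "qz_hom (carrier G) (\<lambda>a. THE r. (a, r) \<in> M)"
      using qz_hom_of_graph[OF g] \<open>Domain M = carrier G\<close> by simp
    show "(THE r. (a, r) \<in> M) = r" if "(a, r) \<in> R0" for a r
      using qz_hom_graph_the[OF g] R0 that by blast
  qed
qed

lemma qz_hom_extend_incseq:
  assumes hom: "\<And>n. qz_hom (H n) (\<Psi> n)" and incr: "\<And>n. H n \<subseteq> H (Suc n)"
    and agree: "\<And>n a. a \<in> H n \<Longrightarrow> \<Psi> (Suc n) a = \<Psi> n a"
  obtains \<Phi> where "qz_hom (carrier G) \<Phi>" and "\<And>n a. a \<in> H n \<Longrightarrow> \<Phi> a = \<Psi> n a"
proof -
  define gr where "gr n = (\<lambda>a. (a, \<Psi> n a)) ` H n" for n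
  have "gr n \<subseteq> gr (Suc n)" for n
    using incr agree unfolding gr_def by force
  then have "mono gr"
    by (simp add: mono_iff_le_Suc)
  then have "chain\<^sub>\<subseteq> (range gr)"
    unfolding chain_subset_def by (metis image_iff monoD nle_le)
  then have "qz_hom_graph (\<Union>(range gr))"
    using hom qz_hom_graph_image unfolding gr_def by (intro qz_hom_graph_Union) auto
  then obtain \<Phi> where \<Phi>: "qz_hom (carrier G) \<Phi>" "\<And>a r. (a, r) \<in> \<Union>(range gr) \<Longrightarrow> \<Phi> a = r"
    using qz_hom_extend_to_carrier by blast
  show ?thesis
  proof (rule that[OF \<Phi>(1)])
    fix n a assume "a \<in> H n"
    then have "(a, \<Psi> n a) \<in> \<Union>(range gr)"
      unfolding gr_def by blast
    then show "\<Phi> a = \<Psi> n a"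
      by (rule \<Phi>(2))
  qed
qed

end

definition qz_coboundary :: "('a, 'b) monoid_scheme \<Rightarrow> ('a \<Rightarrow> rat) \<Rightarrow> 'a \<Rightarrow> 'a \<Rightarrow> int" where
  "qz_coboundary G \<Phi> a b =
    (if a \<in> carrier G \<and> b \<in> carrier G then \<lfloor>\<Phi> a + \<Phi> b - \<Phi> (a \<otimes>\<^bsub>G\<^esub> b)\<rfloor> else 0)"

context comm_group
begin

lemma of_int_qz_coboundary:
  assumes "qz_hom (carrier G) \<Phi>" and "a \<in> carrier G" and "b \<in> carrier G"
  shows "of_int (qz_coboundary G \<Phi> a b) = \<Phi> a + \<Phi> b - \<Phi> (a \<otimes> b)"
  using qz_homD[OF assms] assms(2,3) unfolding qz_coboundary_def by (auto elim: Ints_cases)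

lemma qz_coboundary_cocycles:
  assumes \<Phi>: "qz_hom (carrier G) \<Phi>"
  shows "qz_coboundary G \<Phi> \<in> cocycles G p"
  unfolding cocycles_def
proof (intro CollectI conjI allI impI ballI)
  fix a b assume "a \<notin> carrier G \<or> b \<notin> carrier G"
  then show "qz_coboundary G \<Phi> a b = 0"
    unfolding qz_coboundary_def by auto
next
  fix a b assume ab: "a \<in> carrier G" "b \<in> carrier G"
  have "(of_int (qz_coboundary G \<Phi> a b) :: rat) = of_int (qz_coboundary G \<Phi> b a)"
    using ab by (simp add: of_int_qz_coboundary[OF \<Phi>] m_comm)
  then show "[qz_coboundary G \<Phi> a b = qz_coboundary G \<Phi> b a] (mod int p)"
    by simp
next
  fix a b c assume abc: "a \<in> carrier G" "b \<in> carrier G" "c \<in> carrier G"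
  have "(of_int (qz_coboundary G \<Phi> a b + qz_coboundary G \<Phi> (a \<otimes> b) c) :: rat)
    = of_int (qz_coboundary G \<Phi> b c + qz_coboundary G \<Phi> a (b \<otimes> c))"
    using abc by (simp add: of_int_qz_coboundary[OF \<Phi>] m_assoc)
  then show "[qz_coboundary G \<Phi> a b + qz_coboundary G \<Phi> (a \<otimes> b) c
      = qz_coboundary G \<Phi> b c + qz_coboundary G \<Phi> a (b \<otimes> c)] (mod int p)"
    by (simp only: of_int_eq_iff cong_refl)
qed

end

section \<open>Unbounded torsion\<close>

lemma not_Ints_if_diff_inverse_Ints:
  assumes p: "1 < p" and r: "r - 1 / of_nat p \<in> \<int>"
  shows "(r::rat) \<notin> \<int>"
proof
  assume "r \<in> \<int>"
  then have "r - (r - 1 / of_nat p) \<in> \<int>"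
    using r by (rule Ints_diff)
  then obtain z where z: "1 / (of_nat p :: rat) = of_int z"
    by (auto elim: Ints_cases)
  have "0 < (1 / of_nat p :: rat)" and "(1 / of_nat p :: rat) < 1"
    using p by simp_all
  then show False
    unfolding z by simp
qed

lemma (in group) sum_coboundary_cyclic:
  assumes x: "x \<in> carrier G" and n: "x [^] n = \<one>"
  shows "(\<Sum>i<n. g x + g (x [^] i) - g (x \<otimes> x [^] i)) = of_nat n * (g x :: 'c::comm_ring_1)"
proof -
  have eq: "x \<otimes> x [^] i = x [^] Suc i" for i
    using x by (simp only: nat_pow_Suc2)
  have "(\<Sum>i<n. g x + g (x [^] i) - g (x \<otimes> x [^] i))
      = (\<Sum>i<n. g x) + (\<Sum>i<n. g (x [^] i) - g (x [^] Suc i))"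
    unfolding eq by (simp only: sum.distrib[symmetric] add_diff_eq)
  also have "(\<Sum>i<n. g (x [^] i) - g (x [^] Suc i)) = 0"
    using sum_lessThan_telescope'[of "\<lambda>i. g (x [^] i)" n] n by simp
  finally show ?thesis
    by simp
qed

context p_quotients
begin

abbreviation socle :: "nat \<Rightarrow> 'a set" where
  "socle n \<equiv> {x \<in> pnV n. x [^] p = \<one>}"

lemma socle_antimono: "n \<le> k \<Longrightarrow> socle k \<subseteq> socle n"
  using pnV_antimono by blast

lemma socle_nontrivial_if_unbounded:
  assumes "\<not> p_torsion_bounded V p"
  obtains x where "x \<in> socle n" and "x \<noteq> \<one>"
proof -
  obtain x where x: "x \<in> carrier V" "\<exists>m. x [^] (p ^ m) = \<one>" "x [^] (p ^ n) \<noteq> \<one>"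
    using assms unfolding p_torsion_bounded_def by blast
  define m where "m = (LEAST m. x [^] (p ^ m) = \<one>)"
  have m: "x [^] (p ^ m) = \<one>"
    unfolding m_def using LeastI_ex[OF x(2)] .
  have pow: "x [^] (p ^ (k + l)) = (x [^] (p ^ k)) [^] (p ^ l)" for k l
    using x(1) by (simp add: nat_pow_pow power_add)
  have "n < m"
  proof (rule ccontr)
    assume "\<not> n < m"
    then have "x [^] (p ^ n) = (x [^] (p ^ m)) [^] (p ^ (n - m))"
      using pow[of m "n - m"] by simp
    with x(3) m show False
      by simp
  qed
  define y where "y = x [^] (p ^ (m - 1))"
  have "y [^] p = \<one>"
    using pow[of "m - 1" 1] \<open>n < m\<close> m unfolding y_def by simp
  moreover have "y \<noteq> \<one>"
    using not_less_Least[of "m - 1" "\<lambda>m. x [^] (p ^ m) = \<one>"] \<open>n < m\<close> unfolding y_def m_def by simp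
  moreover have "y = (x [^] (p ^ (m - 1 - n))) [^] (p ^ n)"
    using pow[of "m - 1 - n" n] \<open>n < m\<close> unfolding y_def by simp
  then have "y \<in> pnV n"
    using ppow_subI[OF nat_pow_closed[OF x(1)]] by (simp only:)
  ultimately show ?thesis
    using that by blast
qed

lemma int_pow_eq_one_iff_dvd:
  assumes prime: "Factorial_Ring.prime p" and x: "x \<in> carrier V" "x [^] p = \<one>" "x \<noteq> \<one>"
  shows "x [^] (k::int) = \<one> \<longleftrightarrow> int p dvd k"
proof -
  have "ord x dvd p" and "ord x \<noteq> 1"
    using pow_eq_id[OF x(1)] ord_eq_1[OF x(1)] x(2,3) by auto
  with prime have "ord x = p"
    unfolding prime_nat_iff by blast
  then show ?thesis
    using int_pow_eq_id[OF x(1)] by simp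
qed

lemma qz_hom_adjoin_socle:
  assumes prime: "Factorial_Ring.prime p" and h: "qz_hom H \<Psi>" and x: "x \<in> socle n" "x \<noteq> \<one>"
    and disjoint: "H \<inter> socle n \<subseteq> {\<one>}"
  obtains \<Psi>' where "qz_hom (adjoin H x) \<Psi>'" and "\<forall>a\<in>H. \<Psi>' a = \<Psi> a" and "\<Psi>' x \<notin> \<int>"
proof -
  have xV: "x \<in> carrier V"
    using x subgroup.mem_carrier[OF pnV_subgroup] by blast
  have q: "of_int k * (1 / of_nat p) - \<Psi> (x [^] k) \<in> \<int>" if k: "x [^] k \<in> H" for k :: int
  proof -
    have "x [^] k \<in> pnV n"
      using x(1) subgroup_int_pow_closed[OF pnV_subgroup] by blast
    moreover have "(x [^] k) [^] p = (x [^] p) [^] k"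
      using xV by (simp add: int_pow_int[symmetric] int_pow_pow mult.commute)
    then have "(x [^] k) [^] p = \<one>"
      using x(1) by simp
    ultimately have "x [^] k = \<one>"
      using disjoint k by blast
    then obtain t where "k = int p * t"
      using int_pow_eq_one_iff_dvd[OF prime xV] x by blast
    then have "of_int k * (1 / of_nat p) - \<Psi> (x [^] k) = of_int t - \<Psi> \<one>"
      using prime_gt_0_nat[OF prime] \<open>x [^] k = \<one>\<close> by simp
    then show ?thesis
      using qz_hom_one[OF h] by (simp add: Ints_diff)
  qed
  show ?thesis
  proof (rule that)
    show "qz_hom (adjoin H x) (adjoin_ext H \<Psi> x (1 / of_nat p))"
      using h xV q by (rule qz_hom_adjoin_ext)
    show "\<forall>a\<in>H. adjoin_ext H \<Psi> x (1 / of_nat p) a = \<Psi> a"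
      using adjoin_ext_restrict[OF h xV q] by blast
    show "adjoin_ext H \<Psi> x (1 / of_nat p) x \<notin> \<int>"
      using not_Ints_if_diff_inverse_Ints prime_gt_1_nat[OF prime] adjoin_ext_value[OF h xV q]
      by blast
  qed
qed

lemma socle_meets_finite_trivially:
  assumes meet: "\<And>x. (\<And>n. x \<in> socle n) \<Longrightarrow> x = \<one>" and fin: "finite H"
  obtains n where "j \<le> n" and "H \<inter> socle n \<subseteq> {\<one>}"
proof -
  define level where "level h = (SOME n. h \<notin> socle n)" for h
  have level: "h \<notin> socle (level h)" if h: "h \<in> H - {\<one>}" for h
  proof -
    have "\<exists>n. h \<notin> socle n"
      using meet[of h] h by blast
    then show ?thesis
      unfolding level_def by (rule someI_ex)
  qed
  define n where "n = Max (insert j (level ` (H - {\<one>})))"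
  have fin_levels: "finite (insert j (level ` (H - {\<one>})))"
    using fin by simp
  have "j \<le> n"
    unfolding n_def using fin_levels by simp
  moreover have "H \<inter> socle n \<subseteq> {\<one>}"
  proof
    fix h assume h: "h \<in> H \<inter> socle n"
    show "h \<in> {\<one>}"
    proof (rule ccontr)
      assume "h \<notin> {\<one>}"
      with h have hH: "h \<in> H - {\<one>}"
        by blast
      then have "level h \<le> n"
        unfolding n_def using fin_levels by simp
      with h level[OF hH] show False
        using socle_antimono by blast
    qed
  qed
  ultimately show ?thesis
    by (rule that)
qed

lemma qz_hom_socle_step:
  assumes prime: "Factorial_Ring.prime p" and unbounded: "\<And>n. \<exists>x\<in>socle n. x \<noteq> \<one>"
    and meet: "\<And>x. (\<And>n. x \<in> socle n) \<Longrightarrow> x = \<one>"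
    and fin: "finite H" and h: "qz_hom H \<Psi>"
  obtains H' \<Psi>' x where "qz_hom H' \<Psi>'" and "finite H'" and "H \<subseteq> H'" and "\<forall>a\<in>H. \<Psi>' a = \<Psi> a"
    and "x \<in> socle j" and "x \<in> H'" and "\<Psi>' x \<notin> \<int>"
proof -
  obtain n where "j \<le> n" and disjoint: "H \<inter> socle n \<subseteq> {\<one>}"
    using socle_meets_finite_trivially[OF meet fin] .
  obtain x where x: "x \<in> socle n" "x \<noteq> \<one>"
    using unbounded by blast
  obtain \<Psi>' where \<Psi>': "qz_hom (adjoin H x) \<Psi>'" "\<forall>a\<in>H. \<Psi>' a = \<Psi> a" "\<Psi>' x \<notin> \<int>"
    using qz_hom_adjoin_socle[OF prime h x disjoint] .
  have sub: "subgroup H V"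
    using h by (rule qz_hom_subgroup)
  have xV: "x \<in> carrier V"
    using x subgroup.mem_carrier[OF pnV_subgroup] by blast
  show ?thesis
  proof (rule that[OF \<Psi>'(1) _ subset_adjoin[OF sub] \<Psi>'(2) _ mem_adjoin[OF sub xV] \<Psi>'(3)])
    show "finite (adjoin H x)"
      using fin subgroup.subset[OF sub] xV x(1) prime_gt_0_nat[OF prime]
      by (intro finite_adjoin) auto
    show "x \<in> socle j"
      using x(1) socle_antimono[OF \<open>j \<le> n\<close>] by blast
  qed
qed

text \<open>Union of an increasing sequence of finite partial homomorphisms; each step adjoins an
  element of a socle deep enough to meet the finite subgroup built so far trivially.\<close>

lemma qz_hom_nonintegral_on_socles_of_meet:
  assumes prime: "Factorial_Ring.prime p" and unbounded: "\<And>n. \<exists>x\<in>socle n. x \<noteq> \<one>"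
    and meet: "\<And>x. (\<And>n. x \<in> socle n) \<Longrightarrow> x = \<one>"
  obtains \<Phi> where "qz_hom (carrier V) \<Phi>" and "\<And>n. \<exists>x\<in>socle n. \<Phi> x \<notin> \<int>"
proof -
  let ?P = "\<lambda>(n::nat) (H\<Psi> :: 'a set \<times> ('a \<Rightarrow> rat)). qz_hom (fst H\<Psi>) (snd H\<Psi>) \<and> finite (fst H\<Psi>)"
  let ?Q = "\<lambda>n H\<Psi> H\<Psi>'. fst H\<Psi> \<subseteq> fst H\<Psi>' \<and> (\<forall>a\<in>fst H\<Psi>. snd H\<Psi>' a = snd H\<Psi> a) \<and>
    (\<exists>x\<in>socle n. x \<in> fst H\<Psi>' \<and> snd H\<Psi>' x \<notin> \<int>)"
  have "\<exists>H\<Psi>. ?P 0 H\<Psi>"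
    using qz_hom_trivial by (intro exI[of _ "({\<one>}, \<lambda>_. 0)"]) simp
  moreover have "\<exists>H\<Psi>'. ?P (Suc n) H\<Psi>' \<and> ?Q n H\<Psi> H\<Psi>'" if P: "?P n H\<Psi>" for n H\<Psi>
  proof -
    have fin: "finite (fst H\<Psi>)" and h: "qz_hom (fst H\<Psi>) (snd H\<Psi>)"
      using P by auto
    obtain H' \<Psi>' x where "qz_hom H' \<Psi>'" "finite H'" "fst H\<Psi> \<subseteq> H'" "\<forall>a\<in>fst H\<Psi>. \<Psi>' a = snd H\<Psi> a"
      "x \<in> socle n" "x \<in> H'" "\<Psi>' x \<notin> \<int>"
      using qz_hom_socle_step[OF prime unbounded meet fin h] .
    then show ?thesis
      by (intro exI[of _ "(H', \<Psi>')"]) auto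
  qed
  ultimately obtain c where c: "\<And>n. ?P n (c n) \<and> ?Q n (c n) (c (Suc n))"
    using dependent_nat_choice[of ?P ?Q] by blast
  have "qz_hom (fst (c n)) (snd (c n))" "fst (c n) \<subseteq> fst (c (Suc n))"
    "a \<in> fst (c n) \<Longrightarrow> snd (c (Suc n)) a = snd (c n) a" for n a
    using c[of n] by auto
  then obtain \<Phi> where \<Phi>: "qz_hom (carrier V) \<Phi>" "\<And>n a. a \<in> fst (c n) \<Longrightarrow> \<Phi> a = snd (c n) a"
    using qz_hom_extend_incseq[of "\<lambda>n. fst (c n)" "\<lambda>n. snd (c n)"] by blast
  show ?thesis
  proof (rule that[OF \<Phi>(1)])
    fix n
    obtain x where x: "x \<in> socle n" "x \<in> fst (c (Suc n))" "snd (c (Suc n)) x \<notin> \<int>"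
      using c by blast
    then show "\<exists>x\<in>socle n. \<Phi> x \<notin> \<int>"
      using \<Phi>(2)[OF x(2)] by auto
  qed
qed

lemma exists_qz_hom_nonintegral_on_socles:
  assumes prime: "Factorial_Ring.prime p" and unbounded: "\<not> p_torsion_bounded V p"
  obtains \<Phi> where "qz_hom (carrier V) \<Phi>" and "\<And>n. \<exists>x\<in>socle n. \<Phi> x \<notin> \<int>"
proof (cases "\<exists>x. x \<noteq> \<one> \<and> (\<forall>n. x \<in> socle n)")
  case True
  then obtain x where x: "x \<noteq> \<one>" "\<And>n. x \<in> socle n"
    by blast
  then have xV: "x \<in> carrier V"
    using subgroup.mem_carrier[OF pnV_subgroup] by blast
  obtain \<Psi> where \<Psi>: "qz_hom (adjoin {\<one>} x) \<Psi>" "\<Psi> x \<notin> \<int>"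
    using qz_hom_adjoin_socle[OF prime qz_hom_trivial x(2)[of 0] x(1)] by auto
  obtain \<Phi> where \<Phi>: "qz_hom (carrier V) \<Phi>" "\<And>a r. (a, r) \<in> (\<lambda>a. (a, \<Psi> a)) ` adjoin {\<one>} x \<Longrightarrow> \<Phi> a = r"
    using qz_hom_extend_to_carrier[OF qz_hom_graph_image[OF \<Psi>(1)]] by blast
  have "\<Phi> x = \<Psi> x"
    using \<Phi>(2) mem_adjoin[OF triv_subgroup xV] by blast
  with \<Psi>(2) x(2) have "\<exists>y\<in>socle n. \<Phi> y \<notin> \<int>" for n
    by (intro bexI[of _ x]) auto
  then show ?thesis
    by (rule that[OF \<Phi>(1)])
next
  case False
  then have meet: "x = \<one>" if "\<And>n. x \<in> socle n" for x
    using that by blast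
  have unb: "\<exists>x\<in>socle n. x \<noteq> \<one>" for n
  proof -
    obtain x where "x \<in> socle n" and "x \<noteq> \<one>"
      using socle_nontrivial_if_unbounded[OF unbounded] .
    then show ?thesis
      by blast
  qed
  show ?thesis
    by (rule qz_hom_nonintegral_on_socles_of_meet[OF prime unb meet that])
qed

text \<open>An inflated factor set is constant on pairs from \<open>p\<^sup>nV\<close>, and the sum of a coboundary
  along the powers of an element of order \<open>p\<close> is divisible by \<open>p\<close>.\<close>

lemma dvd_sum_socle_if_inflated:
  assumes F: "F \<in> cocycles (Q n) p" and r: "(f, pullback V (pr n) F) \<in> ext_rel V p"
    and x: "x \<in> socle n"
  shows "int p dvd (\<Sum>i<p. f x (x [^] i))"
proof -
  obtain g where g: "\<forall>a\<in>carrier V. \<forall>b\<in>carrier V.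
      [f a b - pullback V (pr n) F a b = g a + g b - g (a \<otimes> b)] (mod int p)"
    using r unfolding ext_rel_def coboundary_def by blast
  have x_pnV: "x \<in> pnV n" and xp: "x [^] p = \<one>"
    using x by simp_all
  have xV: "x \<in> carrier V"
    using subgroup.mem_carrier[OF pnV_subgroup x_pnV] .
  define c where "c = F (pnV n) (pnV n)"
  have "int p dvd (f x (x [^] i) - c) - (g x + g (x [^] i) - g (x \<otimes> x [^] i))" for i :: nat
  proof -
    have "pr n x = pnV n" and "pr n (x [^] i) = pnV n"
      using pr_pnV x_pnV subgroup_nat_pow_closed[OF pnV_subgroup x_pnV] by simp_all
    then have "pullback V (pr n) F x (x [^] i) = c"
      unfolding pullback_def c_def using xV by simp
    then show ?thesis
      using g[rule_format, OF xV nat_pow_closed[OF xV, of i]] unfolding cong_iff_dvd_diff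
      by (simp add: algebra_simps)
  qed
  then have "int p dvd (\<Sum>i<p. (f x (x [^] i) - c) - (g x + g (x [^] i) - g (x \<otimes> x [^] i)))"
    by (rule dvd_sum)
  also have "(\<Sum>i<p. (f x (x [^] i) - c) - (g x + g (x [^] i) - g (x \<otimes> x [^] i)))
    = (\<Sum>i<p. f x (x [^] i)) - int p * c - int p * g x"
    using sum_coboundary_cyclic[OF xV xp, of g] by (simp add: sum_subtractf)
  finally have "int p dvd ((\<Sum>i<p. f x (x [^] i)) - int p * c - int p * g x) + int p * (c + g x)"
    by (rule dvd_add) simp
  then show ?thesis
    by (simp add: algebra_simps)
qed

lemma qz_coboundary_not_inflated:
  assumes \<Phi>: "qz_hom (carrier V) \<Phi>" and nonintegral: "\<And>n. \<exists>x\<in>socle n. \<Phi> x \<notin> \<int>" and p: "0 < p"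
  shows "\<not> inflated (qz_coboundary V \<Phi>)"
proof
  assume "inflated (qz_coboundary V \<Phi>)"
  then obtain n F where F: "F \<in> cocycles (Q n) p"
    and r: "(qz_coboundary V \<Phi>, pullback V (pr n) F) \<in> ext_rel V p"
    unfolding inflated_def by blast
  obtain x where x: "x \<in> socle n" "\<Phi> x \<notin> \<int>"
    using nonintegral by blast
  have xV: "x \<in> carrier V"
    using x subgroup.mem_carrier[OF pnV_subgroup] by blast
  obtain z where z: "(\<Sum>i<p. qz_coboundary V \<Phi> x (x [^] i)) = int p * z"
    using dvd_sum_socle_if_inflated[OF F r x(1)] by (auto elim: dvdE)
  have "(of_int (\<Sum>i<p. qz_coboundary V \<Phi> x (x [^] i)) :: rat)
    = (\<Sum>i<p. \<Phi> x + \<Phi> (x [^] i) - \<Phi> (x \<otimes> x [^] i))"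
    using xV by (simp add: of_int_qz_coboundary[OF \<Phi>])
  also have "\<dots> = of_nat p * \<Phi> x"
    using x(1) by (intro sum_coboundary_cyclic[OF xV]) simp
  finally have "\<Phi> x = of_int z"
    using z p by simp
  with x(2) show False
    by simp
qed

end

theorem mainTheorem10:
  fixes V :: "('a, 'b) monoid_scheme" and p :: nat
  assumes "Factorial_Ring.prime p" and "comm_group V"
  shows "p_torsion_bounded V p \<longleftrightarrow> bij_betw (canon_map V p) (colim_Ext1 V p) (Ext1 V p)"
proof -
  interpret p_quotients V p
    using assms(2) by (simp add: p_quotients_def)
  have "bij_betw (canon_map V p) (colim_Ext1 V p) (Ext1 V p) \<longleftrightarrow>
      Ext1 V p \<subseteq> canon_map V p ` colim_Ext1 V p"
    using inj_on_canon_map canon_map_into_Ext1 unfolding bij_betw_def by blast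
  also have "\<dots> \<longleftrightarrow> (\<forall>f\<in>cocycles V p. inflated f)"
    by (rule Ext1_subset_canon_map_iff)
  also have "\<dots> \<longleftrightarrow> p_torsion_bounded V p"
  proof
    assume all_inflated: "\<forall>f\<in>cocycles V p. inflated f"
    show "p_torsion_bounded V p"
    proof (rule ccontr)
      assume "\<not> p_torsion_bounded V p"
      then obtain \<Phi> where "qz_hom (carrier V) \<Phi>" and "\<And>n. \<exists>x\<in>socle n. \<Phi> x \<notin> \<int>"
        using exists_qz_hom_nonintegral_on_socles[OF assms(1)] by blast
      with all_inflated show False
        using qz_coboundary_cocycles qz_coboundary_not_inflated prime_gt_0_nat[OF assms(1)] by blast
    qed
  next
    assume "p_torsion_bounded V p"
    then show "\<forall>f\<in>cocycles V p. inflated f"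
      using inflated_if_p_torsion_bounded by blast
  qed
  finally show ?thesis
    by blast
qed

end
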